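(* Let $E$ be a graph with finitely many vertices and $K$ a field of characteristic $0$, and suppose the Leavitt path algebra $L_K(E)$ is noncommutative. Then the multiplicative group $L_K(E)^\times$ contains a non-cyclic free subgroup.
   Context: A graph $E=(E^0,E^1,r,s)$; the Leavitt path algebra $L_K(E)$ is the free associative $K$-algebra generated by $E^0\cup E^1\cup\{e^*:e\in E^1\}$ subject to: $vv'=\delta_{v,v'}v$; $s(e)e=er(e)=e$; $r(e)e^*=e^*s(e)=e^*$; $e^*f=\delta_{e,f}r(e)$; and $v=\sum_{s(e)=v}ee^*$ for every vertex $v$ emitting a finite nonzero number of edges. When $E^0$ is finite, $L_K(E)$ is unital with $1=\sum_{v\in E^0}v$, and $L_K(E)^\times$ is its group of units. *)

theory Defs
  imports "HOL-Algebra.Algebra"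
begin

datatype ('v, 'e) lgen = Vx 'v | Ed 'e | Gh 'e

definition lgens :: "'v set \<Rightarrow> 'e set \<Rightarrow> ('v, 'e) lgen set" where
  "lgens V E = Vx ` V \<union> Ed ` E \<union> Gh ` E"

definition free_alg :: "'g set \<Rightarrow> ('g list \<Rightarrow> 'k::field) ring" where
  "free_alg A = \<lparr>carrier = {f. finite {w. f w \<noteq> 0} \<and> (\<forall>w. f w \<noteq> 0 \<longrightarrow> set w \<subseteq> A)},
                 monoid.mult = (\<lambda>f g w. \<Sum>i\<le>length w. f (take i w) * g (drop i w)),
                 monoid.one = (\<lambda>w. if w = [] then 1 else 0),
                 ring.zero = (\<lambda>w. 0),
                 ring.add = (\<lambda>f g w. f w + g w)\<rparr>"

definition mono :: "'g list \<Rightarrow> 'g list \<Rightarrow> 'k::field" where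
  "mono w = (\<lambda>u. if u = w then 1 else 0)"

definition fdiff :: "('a \<Rightarrow> 'k::field) \<Rightarrow> ('a \<Rightarrow> 'k) \<Rightarrow> 'a \<Rightarrow> 'k" where
  "fdiff a b = (\<lambda>w. a w - b w)"

text \<open>The free algebra is built unital (empty word); the last relation identifies its unit with
  the sum of the vertices, which is the unit of L_K(E) for finite E^0.\<close>
definition lpa_rels :: "'v set \<Rightarrow> 'e set \<Rightarrow> ('e \<Rightarrow> 'v) \<Rightarrow> ('e \<Rightarrow> 'v)
    \<Rightarrow> (('v, 'e) lgen list \<Rightarrow> 'k::field) set" where
  "lpa_rels V E r s =
     {fdiff (mono [Vx v, Vx v']) (if v = v' then mono [Vx v] else (\<lambda>_. 0)) | v v'. v \<in> V \<and> v' \<in> V}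
   \<union> {fdiff (mono [Vx (s e), Ed e]) (mono [Ed e]) | e. e \<in> E}
   \<union> {fdiff (mono [Ed e, Vx (r e)]) (mono [Ed e]) | e. e \<in> E}
   \<union> {fdiff (mono [Vx (r e), Gh e]) (mono [Gh e]) | e. e \<in> E}
   \<union> {fdiff (mono [Gh e, Vx (s e)]) (mono [Gh e]) | e. e \<in> E}
   \<union> {fdiff (mono [Gh e, Ed f]) (if e = f then mono [Vx (r e)] else (\<lambda>_. 0)) | e f. e \<in> E \<and> f \<in> E}
   \<union> {fdiff (mono [Vx v]) (\<lambda>w. \<Sum>e\<in>{e\<in>E. s e = v}. mono [Ed e, Gh e] w) | v.
        v \<in> V \<and> finite {e\<in>E. s e = v} \<and> {e\<in>E. s e = v} \<noteq> {}}
   \<union> {fdiff (mono []) (\<lambda>w. \<Sum>v\<in>V. mono [Vx v] w)}"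

definition leavitt :: "'v set \<Rightarrow> 'e set \<Rightarrow> ('e \<Rightarrow> 'v) \<Rightarrow> ('e \<Rightarrow> 'v)
    \<Rightarrow> (('v, 'e) lgen list \<Rightarrow> 'k::field) set ring" where
  "leavitt V E r s =
     (free_alg (lgens V E)) Quot (genideal (free_alg (lgens V E)) (lpa_rels V E r s))"

definition noncommutative :: "('a, 'b) ring_scheme \<Rightarrow> bool" where
  "noncommutative R \<longleftrightarrow> (\<exists>x\<in>carrier R. \<exists>y\<in>carrier R. x \<otimes>\<^bsub>R\<^esub> y \<noteq> y \<otimes>\<^bsub>R\<^esub> x)"

text \<open>A word is a list of (generator, exponent sign); True = +1, False = -1.\<close>
definition word_eval :: "('a, 'b) monoid_scheme \<Rightarrow> ('a \<times> bool) list \<Rightarrow> 'a" where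
  "word_eval G ws = foldr (\<lambda>(b, e) acc. (if e then b else inv\<^bsub>G\<^esub> b) \<otimes>\<^bsub>G\<^esub> acc) ws \<one>\<^bsub>G\<^esub>"

definition reduced_word :: "('a \<times> bool) list \<Rightarrow> bool" where
  "reduced_word ws \<longleftrightarrow>
     (\<forall>i. Suc i < length ws \<longrightarrow> \<not> (fst (ws ! i) = fst (ws ! Suc i) \<and> snd (ws ! i) \<noteq> snd (ws ! Suc i)))"

definition free_basis :: "('a, 'b) monoid_scheme \<Rightarrow> 'a set \<Rightarrow> bool" where
  "free_basis G B \<longleftrightarrow> B \<subseteq> carrier G \<and>
     (\<forall>ws. ws \<noteq> [] \<and> set (map fst ws) \<subseteq> B \<and> reduced_word ws \<longrightarrow> word_eval G ws \<noteq> \<one>\<^bsub>G\<^esub>)"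

definition free_subgroup :: "('a, 'b) monoid_scheme \<Rightarrow> 'a set \<Rightarrow> bool" where
  "free_subgroup G H \<longleftrightarrow> subgroup H G \<and> (\<exists>B. free_basis G B \<and> generate G B = H)"

definition cyclic_subgroup :: "('a, 'b) monoid_scheme \<Rightarrow> 'a set \<Rightarrow> bool" where
  "cyclic_subgroup G H \<longleftrightarrow> (\<exists>g\<in>carrier G. H = generate G {g})"

end

theory Submission
  imports Defs
begin

text \<open>If some edge \<open>e\<close> is not a loop, then \<open>E11 = e e\<^sup>*\<close>, \<open>E12 = e\<close>, \<open>E21 = e\<^sup>*\<close> multiply
  like matrix units; if two distinct edges \<open>e, f\<close> have the same range, so do
  \<open>e e\<^sup>*\<close>, \<open>e f\<^sup>*\<close>, \<open>f e\<^sup>*\<close>. Then \<open>1 + 2 E12\<close> and \<open>1 + 2 E21\<close> act on the left ideal spanned by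
  \<open>E11, E21\<close> like Sanov's matrices \<open>[[1, 2], [0, 1]]\<close> and \<open>[[1, 0], [2, 1]]\<close> on
  \<open>\<int>\<^sup>2 \<subseteq> K\<^sup>2\<close> (characteristic 0), and the ping-pong argument on the regions \<open>|y| < |x|\<close>
  and \<open>|x| < |y|\<close> shows that they generate a free group of rank two. Otherwise every
  vertex emits at most one edge, which is a loop, and \<open>L\<^sub>K(E)\<close> is commutative.
  That \<open>E11 \<noteq> 0\<close> comes down to vertices being nonzero, which is seen from the action of
  \<open>L\<^sub>K(E)\<close> on functions on maximal paths.\<close>

section \<open>The free algebra\<close>

definition word_conv :: "('g list \<Rightarrow> 'k::field) \<Rightarrow> ('g list \<Rightarrow> 'k) \<Rightarrow> 'g list \<Rightarrow> 'k" where
  "word_conv f g = (\<lambda>w. \<Sum>i\<le>length w. f (take i w) * g (drop i w))"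

lemma free_alg_mult: "monoid.mult (free_alg A) = word_conv"
  by (rule ext)+ (simp add: free_alg_def word_conv_def)

lemma free_alg_add: "ring.add (free_alg A) = (\<lambda>f g w. f w + g w)"
  by (simp add: free_alg_def)

lemma free_alg_one: "monoid.one (free_alg A) = mono []"
  by (auto simp add: free_alg_def mono_def)

lemma free_alg_zero: "ring.zero (free_alg A) = (\<lambda>w. 0)"
  by (simp add: free_alg_def)

lemma free_alg_carrier:
  "carrier (free_alg A) = {f. finite {w. f w \<noteq> 0} \<and> (\<forall>w. f w \<noteq> 0 \<longrightarrow> set w \<subseteq> A)}"
  by (simp add: free_alg_def)

lemma word_conv_eq_sum_pairs:
  assumes "finite F" "finite G" "{w. f w \<noteq> 0} \<subseteq> F" "{w. g w \<noteq> 0} \<subseteq> G"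
  shows "word_conv f g w = (\<Sum>u\<in>F. \<Sum>v\<in>G. if u @ v = w then f u * g v else 0)"
proof -
  define I0 where "I0 = {i. i \<le> length w \<and> take i w \<in> F \<and> drop i w \<in> G}"
  define P where "P = {p \<in> F \<times> G. fst p @ snd p = w}"
  have "word_conv f g w = (\<Sum>i\<in>I0. f (take i w) * g (drop i w))"
    unfolding word_conv_def
    by (rule sum.mono_neutral_right) (use assms in \<open>auto simp: I0_def\<close>)
  also have "\<dots> = (\<Sum>p\<in>P. f (fst p) * g (snd p))"
    by (rule sum.reindex_bij_witness[of _ "\<lambda>p. length (fst p)" "\<lambda>i. (take i w, drop i w)"])
       (auto simp: I0_def P_def)
  also have "\<dots> = (\<Sum>p\<in>F \<times> G. if fst p @ snd p = w then f (fst p) * g (snd p) else 0)"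
    unfolding P_def using assms by (simp add: sum.inter_filter)
  also have "\<dots> = (\<Sum>u\<in>F. \<Sum>v\<in>G. if u @ v = w then f u * g v else 0)"
    by (simp add: sum.cartesian_product split_beta)
  finally show ?thesis .
qed

lemma word_conv_support:
  "{w. word_conv f g w \<noteq> 0} \<subseteq> (\<lambda>p. fst p @ snd p) ` ({w. f w \<noteq> 0} \<times> {w. g w \<noteq> 0})"
proof
  fix w assume "w \<in> {w. word_conv f g w \<noteq> 0}"
  then obtain i where "i \<le> length w" "f (take i w) * g (drop i w) \<noteq> 0"
    unfolding word_conv_def by (metis (mono_tags, lifting) atMost_iff mem_Collect_eq sum.neutral)
  then show "w \<in> (\<lambda>p. fst p @ snd p) ` ({w. f w \<noteq> 0} \<times> {w. g w \<noteq> 0})"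
    by (auto intro!: image_eqI[of _ _ "(take i w, drop i w)"])
qed

lemma if_zero_mult: "(if c then a else 0) * (b::'a::field) = (if c then a * b else 0)"
  and mult_if_zero: "(a::'a::field) * (if c then b else 0) = (if c then a * b else 0)"
  and mult_if_one: "(a::'a::field) * (if c then 1 else 0) = (if c then a else 0)"
  by simp_all

lemma word_conv_weighted_sum:
  assumes "finite F" "finite G" "{w. f w \<noteq> 0} \<subseteq> F" "{w. g w \<noteq> 0} \<subseteq> G"
    and "finite Xs" "(\<lambda>p. fst p @ snd p) ` (F \<times> G) \<subseteq> Xs"
  shows "(\<Sum>x\<in>Xs. word_conv f g x * c x) = (\<Sum>a\<in>F. \<Sum>b\<in>G. f a * g b * c (a @ b))"
proof -
  have "(\<Sum>x\<in>Xs. word_conv f g x * c x)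
      = (\<Sum>x\<in>Xs. \<Sum>a\<in>F. \<Sum>b\<in>G. if a @ b = x then f a * g b * c x else 0)"
    unfolding word_conv_eq_sum_pairs[OF assms(1-4)]
    by (intro sum.cong refl) (simp add: sum_distrib_right if_zero_mult)
  also have "\<dots> = (\<Sum>a\<in>F. \<Sum>b\<in>G. \<Sum>x\<in>Xs. if a @ b = x then f a * g b * c x else 0)"
    by (simp add: sum.swap[of _ Xs] sum.swap[of _ Xs G])
  also have "\<dots> = (\<Sum>a\<in>F. \<Sum>b\<in>G. f a * g b * c (a @ b))"
  proof (intro sum.cong refl)
    fix a b assume "a \<in> F" "b \<in> G"
    then have "a @ b \<in> Xs" using assms(6) by force
    then show "(\<Sum>x\<in>Xs. if a @ b = x then f a * g b * c x else 0) = f a * g b * c (a @ b)"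
      using assms(5) by (simp add: sum.delta)
  qed
  finally show ?thesis .
qed

lemma word_conv_closed:
  assumes "f \<in> carrier (free_alg A)" "g \<in> carrier (free_alg A)"
  shows "word_conv f g \<in> carrier (free_alg A)"
proof -
  have fin: "finite ((\<lambda>p. fst p @ snd p) ` ({w. f w \<noteq> 0} \<times> {w. g w \<noteq> 0}))"
    using assms by (simp add: free_alg_carrier)
  have "set w \<subseteq> A" if "word_conv f g w \<noteq> 0" for w
  proof -
    have "w \<in> (\<lambda>p. fst p @ snd p) ` ({w. f w \<noteq> 0} \<times> {w. g w \<noteq> 0})"
      using that word_conv_support[of f g] by blast
    then obtain a b where "w = a @ b" "f a \<noteq> 0" "g b \<noteq> 0" by auto
    then show ?thesis using assms by (auto simp: free_alg_carrier)
  qed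
  moreover have "finite {w. word_conv f g w \<noteq> 0}"
    by (rule finite_subset[OF word_conv_support fin])
  ultimately show ?thesis by (simp add: free_alg_carrier)
qed

lemma word_conv_assoc:
  assumes "f \<in> carrier (free_alg A)" "g \<in> carrier (free_alg A)" "h \<in> carrier (free_alg A)"
  shows "word_conv (word_conv f g) h = word_conv f (word_conv g h)"
proof
  fix w
  define F where "F = {w. f w \<noteq> 0}"
  define G where "G = {w. g w \<noteq> 0}"
  define H where "H = {w. h w \<noteq> 0}"
  define FG where "FG = (\<lambda>p. fst p @ snd p) ` (F \<times> G)"
  define GH where "GH = (\<lambda>p. fst p @ snd p) ` (G \<times> H)"
  have fin: "finite F" "finite G" "finite H"
    using assms by (auto simp: free_alg_carrier F_def G_def H_def)
  then have fin2: "finite FG" "finite GH" by (auto simp: FG_def GH_def)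
  have supp: "{w. f w \<noteq> 0} \<subseteq> F" "{w. h w \<noteq> 0} \<subseteq> H" by (auto simp: F_def H_def)
  have supp_fg: "{w. word_conv f g w \<noteq> 0} \<subseteq> FG" and supp_gh: "{w. word_conv g h w \<noteq> 0} \<subseteq> GH"
    unfolding F_def G_def H_def FG_def GH_def by (rule word_conv_support)+
  let ?triple = "\<Sum>a\<in>F. \<Sum>b\<in>G. \<Sum>c\<in>H. if a @ b @ c = w then f a * g b * h c else 0"
  have "word_conv (word_conv f g) h w
      = (\<Sum>x\<in>FG. word_conv f g x * (\<Sum>c\<in>H. if x @ c = w then h c else 0))"
    unfolding word_conv_eq_sum_pairs[OF fin2(1) fin(3) supp_fg supp(2)]
    by (intro sum.cong refl) (simp add: sum_distrib_left mult_if_zero)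
  also have "\<dots> = (\<Sum>a\<in>F. \<Sum>b\<in>G. f a * g b * (\<Sum>c\<in>H. if a @ b @ c = w then h c else 0))"
    by (subst word_conv_weighted_sum[OF fin(1,2) _ _ fin2(1)]) (auto simp: F_def G_def FG_def)
  also have "\<dots> = ?triple"
    by (simp add: sum_distrib_left mult_if_zero)
  finally have lhs: "word_conv (word_conv f g) h w = ?triple" .
  have "word_conv f (word_conv g h) w
      = (\<Sum>a\<in>F. f a * (\<Sum>y\<in>GH. word_conv g h y * (if a @ y = w then 1 else 0)))"
    unfolding word_conv_eq_sum_pairs[OF fin(1) fin2(2) supp(1) supp_gh]
    by (intro sum.cong refl)
       (simp add: sum_distrib_left mult_if_zero mult_if_one mult.assoc, intro sum.cong, auto)
  also have "\<dots> = (\<Sum>a\<in>F. f a * (\<Sum>b\<in>G. \<Sum>c\<in>H. g b * h c * (if a @ b @ c = w then 1 else 0)))"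
    by (subst word_conv_weighted_sum[OF fin(2,3) _ _ fin2(2)]) (auto simp: G_def H_def GH_def)
  also have "\<dots> = ?triple"
    by (simp add: sum_distrib_left mult_if_zero mult_if_one mult.assoc cong: if_cong)
  finally show "word_conv (word_conv f g) h w = word_conv f (word_conv g h) w"
    using lhs by simp
qed

lemma word_conv_one_left: "word_conv (mono []) f = f"
proof
  fix w
  have "word_conv (mono []) f w = (\<Sum>i\<le>length w. if i = 0 then f w else 0)"
    unfolding word_conv_def by (intro sum.cong refl) (auto simp: mono_def)
  then show "word_conv (mono []) f w = f w" by simp
qed

lemma word_conv_one_right: "word_conv f (mono []) = f"
proof
  fix w
  have "word_conv f (mono []) w = (\<Sum>i\<le>length w. if i = length w then f w else 0)"
    unfolding word_conv_def by (intro sum.cong refl) (auto simp: mono_def)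
  then show "word_conv f (mono []) w = f w" by simp
qed

lemma word_conv_add_left: "word_conv (\<lambda>w. f w + g w) h = (\<lambda>w. word_conv f h w + word_conv g h w)"
  by (simp add: word_conv_def sum.distrib distrib_right)

lemma word_conv_add_right: "word_conv h (\<lambda>w. f w + g w) = (\<lambda>w. word_conv h f w + word_conv h g w)"
  by (simp add: word_conv_def sum.distrib distrib_left)

lemma mono_conv_mono: "word_conv (mono u) (mono v) = mono (u @ v)"
proof
  fix w
  have "word_conv (mono u) (mono v) w
      = (\<Sum>a\<in>{u}. \<Sum>b\<in>{v}. if a @ b = w then mono u a * mono v b else 0)"
    by (rule word_conv_eq_sum_pairs) (auto simp: mono_def)
  then show "word_conv (mono u) (mono v) w = mono (u @ v) w" by (auto simp: mono_def)
qed

lemma mono_in_free_alg: "set u \<subseteq> A \<Longrightarrow> mono u \<in> carrier (free_alg A)"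
  by (simp add: free_alg_carrier mono_def)

lemma zero_in_free_alg: "(\<lambda>_. 0) \<in> carrier (free_alg A)"
  by (simp add: free_alg_carrier)

lemma uminus_in_free_alg: "f \<in> carrier (free_alg A) \<Longrightarrow> (\<lambda>w. - f w) \<in> carrier (free_alg A)"
  by (simp add: free_alg_carrier)

lemma add_in_free_alg:
  assumes "f \<in> carrier (free_alg A)" "g \<in> carrier (free_alg A)"
  shows "(\<lambda>w. f w + g w) \<in> carrier (free_alg A)"
  unfolding free_alg_carrier mem_Collect_eq
proof (intro conjI allI impI)
  fix w assume "f w + g w \<noteq> 0"
  then have "f w \<noteq> 0 \<or> g w \<noteq> 0" by auto
  then show "set w \<subseteq> A" using assms by (auto simp: free_alg_carrier)
next
  have "{w. f w + g w \<noteq> 0} \<subseteq> {w. f w \<noteq> 0} \<union> {w. g w \<noteq> 0}" by auto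
  then show "finite {w. f w + g w \<noteq> 0}"
    using assms by (auto simp: free_alg_carrier elim: finite_subset)
qed

lemma sum_in_free_alg:
  "finite S \<Longrightarrow> (\<And>i. i \<in> S \<Longrightarrow> h i \<in> carrier (free_alg A))
    \<Longrightarrow> (\<lambda>w. \<Sum>i\<in>S. h i w) \<in> carrier (free_alg A)"
  by (induction S rule: finite_induct) (simp_all add: zero_in_free_alg add_in_free_alg)

lemma fdiff_in_free_alg:
  "f \<in> carrier (free_alg A) \<Longrightarrow> g \<in> carrier (free_alg A) \<Longrightarrow> fdiff f g \<in> carrier (free_alg A)"
  using add_in_free_alg[OF _ uminus_in_free_alg] by (simp add: fdiff_def)

lemma free_alg_is_ring: "ring (free_alg A :: ('g list \<Rightarrow> 'k::field) ring)"
proof (rule ringI)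
  show "abelian_group (free_alg A :: ('g list \<Rightarrow> 'k) ring)"
  proof (rule abelian_groupI)
    fix x :: "'g list \<Rightarrow> 'k" assume "x \<in> carrier (free_alg A)"
    then show "\<exists>y\<in>carrier (free_alg A). y \<oplus>\<^bsub>free_alg A\<^esub> x = \<zero>\<^bsub>free_alg A\<^esub>"
      by (intro bexI[of _ "\<lambda>w. - x w"])
         (simp_all add: free_alg_add free_alg_zero uminus_in_free_alg)
  qed (simp_all add: free_alg_add free_alg_zero add_in_free_alg zero_in_free_alg add_ac)
  show "monoid (free_alg A :: ('g list \<Rightarrow> 'k) ring)"
    by (rule monoidI)
       (simp_all add: free_alg_mult free_alg_one word_conv_closed word_conv_assoc
         word_conv_one_left word_conv_one_right mono_in_free_alg)
qed (simp_all add: free_alg_mult free_alg_add word_conv_add_left word_conv_add_right)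

lemma free_alg_minus: "f \<in> carrier (free_alg A) \<Longrightarrow> \<ominus>\<^bsub>free_alg A\<^esub> f = (\<lambda>w. - f w)"
  by (rule abelian_group.minus_equality[OF ring.is_abelian_group[OF free_alg_is_ring]])
     (simp_all add: free_alg_add free_alg_zero uminus_in_free_alg)

definition scalar :: "'k::field \<Rightarrow> 'g list \<Rightarrow> 'k" where
  "scalar c = (\<lambda>w. if w = [] then c else 0)"

lemma scalar_in_free_alg: "scalar c \<in> carrier (free_alg A)"
proof -
  have "{w. scalar c w \<noteq> 0} \<subseteq> {[]}" by (auto simp: scalar_def)
  then show ?thesis by (auto simp: free_alg_carrier scalar_def elim: finite_subset)
qed

lemma word_conv_scalar_left: "word_conv (scalar c) f = (\<lambda>w. c * f w)"
proof
  fix w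
  have "word_conv (scalar c) f w = (\<Sum>i\<le>length w. if i = 0 then c * f w else 0)"
    unfolding word_conv_def by (intro sum.cong refl) (auto simp: scalar_def)
  then show "word_conv (scalar c) f w = c * f w" by simp
qed

lemma word_conv_scalar_right: "word_conv f (scalar c) = (\<lambda>w. c * f w)"
proof
  fix w
  have "word_conv f (scalar c) w = (\<Sum>i\<le>length w. if i = length w then c * f w else 0)"
    unfolding word_conv_def by (intro sum.cong refl) (auto simp: scalar_def mult.commute)
  then show "word_conv f (scalar c) w = c * f w" by simp
qed

section \<open>The Leavitt path algebra as a quotient\<close>

type_synonym ('v, 'e, 'k) lpa_word_fun = "('v, 'e) lgen list \<Rightarrow> 'k"

locale lpa =
  fixes V :: "'v set" and E :: "'e set" and r s :: "'e \<Rightarrow> 'v" and field_type :: "'k::field itself"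
  assumes finite_V: "finite V" and range_in_V: "r ` E \<subseteq> V" and source_in_V: "s ` E \<subseteq> V"
begin

abbreviation FA :: "('v, 'e, 'k) lpa_word_fun ring" where
  "FA \<equiv> free_alg (lgens V E)"

abbreviation J :: "('v, 'e, 'k) lpa_word_fun set" where
  "J \<equiv> genideal FA (lpa_rels V E r s)"

abbreviation L :: "('v, 'e, 'k) lpa_word_fun set ring" where
  "L \<equiv> leavitt V E r s"

definition proj :: "('v, 'e, 'k) lpa_word_fun \<Rightarrow> ('v, 'e, 'k) lpa_word_fun set" where
  "proj f = J +>\<^bsub>FA\<^esub> f"

lemma edge_range_in_V: "e \<in> E \<Longrightarrow> r e \<in> V" and edge_source_in_V: "e \<in> E \<Longrightarrow> s e \<in> V"
  using range_in_V source_in_V by auto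

lemma lgens_intros [simp]:
  "v \<in> V \<Longrightarrow> Vx v \<in> lgens V E" "e \<in> E \<Longrightarrow> Ed e \<in> lgens V E" "e \<in> E \<Longrightarrow> Gh e \<in> lgens V E"
  by (auto simp: lgens_def)

lemma lpa_rels_in_FA: "lpa_rels V E r s \<subseteq> carrier FA"
  unfolding lpa_rels_def
  by (auto intro!: fdiff_in_free_alg mono_in_free_alg sum_in_free_alg zero_in_free_alg
      simp: edge_range_in_V edge_source_in_V finite_V)

lemma ideal_J: "ideal J FA"
  by (rule ring.genideal_ideal[OF free_alg_is_ring lpa_rels_in_FA])

lemma ring_L: "ring L"
  unfolding leavitt_def by (rule ideal.quotient_is_ring[OF ideal_J])

sublocale L: ring L
  by (rule ring_L)

lemma proj_ring_hom: "proj \<in> ring_hom FA L"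
  unfolding leavitt_def proj_def[abs_def] by (rule ideal.rcos_ring_hom[OF ideal_J])

lemma carrier_L: "carrier L = proj ` carrier FA"
  by (auto simp: leavitt_def FactRing_def A_RCOSETS_def' proj_def)

lemma proj_eq_zero_iff: "f \<in> carrier FA \<Longrightarrow> proj f = \<zero>\<^bsub>L\<^esub> \<longleftrightarrow> f \<in> J"
  using ring.a_rcos_zero[OF free_alg_is_ring ideal_J] ideal.rcos_const_imp_mem[OF ideal_J]
  by (auto simp: leavitt_def FactRing_def proj_def)

lemma proj_in_L: "f \<in> carrier FA \<Longrightarrow> proj f \<in> carrier L"
  using proj_ring_hom by (rule ring_hom_closed)

lemma proj_mult:
  "f \<in> carrier FA \<Longrightarrow> g \<in> carrier FA \<Longrightarrow> proj (word_conv f g) = proj f \<otimes>\<^bsub>L\<^esub> proj g"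
  using ring_hom_mult[OF proj_ring_hom] by (simp add: free_alg_mult)

lemma proj_add:
  "f \<in> carrier FA \<Longrightarrow> g \<in> carrier FA \<Longrightarrow> proj (\<lambda>w. f w + g w) = proj f \<oplus>\<^bsub>L\<^esub> proj g"
  using ring_hom_add[OF proj_ring_hom] by (simp add: free_alg_add)

lemma proj_one: "proj (mono []) = \<one>\<^bsub>L\<^esub>"
  using ring_hom_one[OF proj_ring_hom] by (simp add: free_alg_one)

lemma proj_zero: "proj (\<lambda>_. 0) = \<zero>\<^bsub>L\<^esub>"
  using ring_hom_zero[OF proj_ring_hom free_alg_is_ring ring_L] by (simp add: free_alg_zero)

lemma proj_eq_if_relation:
  assumes f: "f \<in> carrier FA" and g: "g \<in> carrier FA" and rel: "fdiff f g \<in> lpa_rels V E r s"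
  shows "proj f = proj g"
proof -
  have d: "fdiff f g \<in> carrier FA" using fdiff_in_free_alg[OF f g] .
  have "fdiff f g \<in> J" using ring.genideal_self[OF free_alg_is_ring lpa_rels_in_FA] rel by blast
  have "f = (\<lambda>w. fdiff f g w + g w)" by (simp add: fdiff_def)
  then have "proj f = proj (fdiff f g) \<oplus>\<^bsub>L\<^esub> proj g" using proj_add[OF d g] by simp
  also have "\<dots> = proj g" using proj_eq_zero_iff[OF d] \<open>fdiff f g \<in> J\<close> proj_in_L[OF g] by simp
  finally show ?thesis .
qed

lemma proj_mono_Cons:
  "a \<in> lgens V E \<Longrightarrow> set w \<subseteq> lgens V E \<Longrightarrow> proj (mono (a # w)) = proj (mono [a]) \<otimes>\<^bsub>L\<^esub> proj (mono w)"
  using proj_mult[of "mono [a]" "mono w"] by (simp add: mono_conv_mono mono_in_free_alg)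

definition vtx :: "'v \<Rightarrow> ('v, 'e, 'k) lpa_word_fun set" where
  "vtx v = proj (mono [Vx v])"

definition edg :: "'e \<Rightarrow> ('v, 'e, 'k) lpa_word_fun set" where
  "edg e = proj (mono [Ed e])"

definition ghost :: "'e \<Rightarrow> ('v, 'e, 'k) lpa_word_fun set" where
  "ghost e = proj (mono [Gh e])"

lemma vtx_in_L: "v \<in> V \<Longrightarrow> vtx v \<in> carrier L"
  and edg_in_L: "e \<in> E \<Longrightarrow> edg e \<in> carrier L"
  and ghost_in_L: "e \<in> E \<Longrightarrow> ghost e \<in> carrier L"
  by (auto simp: vtx_def edg_def ghost_def intro!: proj_in_L mono_in_free_alg)

lemmas generators_in_L = vtx_in_L edg_in_L ghost_in_L edge_range_in_V edge_source_in_V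

lemma proj_relation_length_two:
  assumes "fdiff (mono [a, b]) g \<in> lpa_rels V E r s" "a \<in> lgens V E" "b \<in> lgens V E"
    and "g \<in> carrier FA"
  shows "proj (mono [a]) \<otimes>\<^bsub>L\<^esub> proj (mono [b]) = proj g"
  using proj_eq_if_relation[OF _ assms(4,1)] proj_mono_Cons[of a "[b]"] assms(2,3)
  by (simp add: mono_in_free_alg)

lemma vtx_mult_vtx:
  assumes "v \<in> V" "v' \<in> V"
  shows "vtx v \<otimes>\<^bsub>L\<^esub> vtx v' = (if v = v' then vtx v else \<zero>\<^bsub>L\<^esub>)"
proof -
  have "fdiff (mono [Vx v, Vx v']) (if v = v' then mono [Vx v] else (\<lambda>_. 0))
      \<in> (lpa_rels V E r s :: ('v, 'e, 'k) lpa_word_fun set)"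
    using assms unfolding lpa_rels_def by blast
  then have "proj (mono [Vx v]) \<otimes>\<^bsub>L\<^esub> proj (mono [Vx v'])
      = proj (if v = v' then mono [Vx v] else (\<lambda>_. 0))"
    by (rule proj_relation_length_two) (simp_all add: assms mono_in_free_alg zero_in_free_alg)
  then show ?thesis by (auto simp: vtx_def proj_zero)
qed

lemma vtx_source_mult_edg:
  assumes "e \<in> E"
  shows "vtx (s e) \<otimes>\<^bsub>L\<^esub> edg e = edg e"
proof -
  have "fdiff (mono [Vx (s e), Ed e]) (mono [Ed e])
      \<in> (lpa_rels V E r s :: ('v, 'e, 'k) lpa_word_fun set)"
    using assms unfolding lpa_rels_def by blast
  then have "proj (mono [Vx (s e)]) \<otimes>\<^bsub>L\<^esub> proj (mono [Ed e]) = proj (mono [Ed e])"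
    by (rule proj_relation_length_two) (simp_all add: assms mono_in_free_alg edge_source_in_V)
  then show ?thesis by (simp add: vtx_def edg_def)
qed

lemma edg_mult_vtx_range:
  assumes "e \<in> E"
  shows "edg e \<otimes>\<^bsub>L\<^esub> vtx (r e) = edg e"
proof -
  have "fdiff (mono [Ed e, Vx (r e)]) (mono [Ed e])
      \<in> (lpa_rels V E r s :: ('v, 'e, 'k) lpa_word_fun set)"
    using assms unfolding lpa_rels_def by blast
  then have "proj (mono [Ed e]) \<otimes>\<^bsub>L\<^esub> proj (mono [Vx (r e)]) = proj (mono [Ed e])"
    by (rule proj_relation_length_two) (simp_all add: assms mono_in_free_alg edge_range_in_V)
  then show ?thesis by (simp add: vtx_def edg_def)
qed

lemma vtx_range_mult_ghost:
  assumes "e \<in> E"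
  shows "vtx (r e) \<otimes>\<^bsub>L\<^esub> ghost e = ghost e"
proof -
  have "fdiff (mono [Vx (r e), Gh e]) (mono [Gh e])
      \<in> (lpa_rels V E r s :: ('v, 'e, 'k) lpa_word_fun set)"
    using assms unfolding lpa_rels_def by blast
  then have "proj (mono [Vx (r e)]) \<otimes>\<^bsub>L\<^esub> proj (mono [Gh e]) = proj (mono [Gh e])"
    by (rule proj_relation_length_two) (simp_all add: assms mono_in_free_alg edge_range_in_V)
  then show ?thesis by (simp add: vtx_def ghost_def)
qed

lemma ghost_mult_vtx_source:
  assumes "e \<in> E"
  shows "ghost e \<otimes>\<^bsub>L\<^esub> vtx (s e) = ghost e"
proof -
  have "fdiff (mono [Gh e, Vx (s e)]) (mono [Gh e])
      \<in> (lpa_rels V E r s :: ('v, 'e, 'k) lpa_word_fun set)"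
    using assms unfolding lpa_rels_def by blast
  then have "proj (mono [Gh e]) \<otimes>\<^bsub>L\<^esub> proj (mono [Vx (s e)]) = proj (mono [Gh e])"
    by (rule proj_relation_length_two) (simp_all add: assms mono_in_free_alg edge_source_in_V)
  then show ?thesis by (simp add: vtx_def ghost_def)
qed

lemma ghost_mult_edg:
  assumes "e \<in> E" "f \<in> E"
  shows "ghost e \<otimes>\<^bsub>L\<^esub> edg f = (if e = f then vtx (r e) else \<zero>\<^bsub>L\<^esub>)"
proof -
  have "fdiff (mono [Gh e, Ed f]) (if e = f then mono [Vx (r e)] else (\<lambda>_. 0))
      \<in> (lpa_rels V E r s :: ('v, 'e, 'k) lpa_word_fun set)"
    using assms unfolding lpa_rels_def by blast
  then have "proj (mono [Gh e]) \<otimes>\<^bsub>L\<^esub> proj (mono [Ed f])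
      = proj (if e = f then mono [Vx (r e)] else (\<lambda>_. 0))"
    by (rule proj_relation_length_two)
       (simp_all add: assms mono_in_free_alg edge_range_in_V zero_in_free_alg)
  then show ?thesis by (auto simp: vtx_def edg_def ghost_def proj_zero)
qed

lemma vtx_eq_edg_mult_ghost_if_single_edge:
  assumes "e \<in> E" "{f \<in> E. s f = s e} = {e}"
  shows "vtx (s e) = edg e \<otimes>\<^bsub>L\<^esub> ghost e"
proof -
  have "(\<lambda>w. \<Sum>f\<in>{f \<in> E. s f = s e}. mono [Ed f, Gh f] w)
      = (mono [Ed e, Gh e] :: ('v, 'e, 'k) lpa_word_fun)"
    using assms(2) by simp
  moreover have "fdiff (mono [Vx (s e)]) (\<lambda>w. \<Sum>f\<in>{f \<in> E. s f = s e}. mono [Ed f, Gh f] w)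
      \<in> (lpa_rels V E r s :: ('v, 'e, 'k) lpa_word_fun set)"
    unfolding lpa_rels_def
    by (rule UnI1, rule UnI2, intro CollectI exI[of _ "s e"])
       (use assms edge_source_in_V in auto)
  ultimately have "proj (mono [Vx (s e)]) = proj (mono [Ed e, Gh e])"
    using assms by (intro proj_eq_if_relation) (auto simp: mono_in_free_alg edge_source_in_V)
  then show ?thesis
    using assms proj_mono_Cons[of "Ed e" "[Gh e]"] by (simp add: vtx_def edg_def ghost_def)
qed

definition lscalar :: "'k \<Rightarrow> ('v, 'e, 'k) lpa_word_fun set" where
  "lscalar c = proj (scalar c)"

lemma lscalar_in_L: "lscalar c \<in> carrier L"
  by (simp add: lscalar_def proj_in_L scalar_in_free_alg)

lemma lscalar_add: "lscalar (c + d) = lscalar c \<oplus>\<^bsub>L\<^esub> lscalar d"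
proof -
  have "scalar (c + d) = (\<lambda>w::('v, 'e) lgen list. scalar c w + scalar d w)"
    by (auto simp: scalar_def)
  then show ?thesis
    using proj_add[OF scalar_in_free_alg scalar_in_free_alg] by (simp add: lscalar_def)
qed

lemma lscalar_mult: "lscalar (c * d) = lscalar c \<otimes>\<^bsub>L\<^esub> lscalar d"
proof -
  have "scalar (c * d) = word_conv (scalar c) (scalar d :: ('v, 'e, 'k) lpa_word_fun)"
    unfolding word_conv_scalar_left by (auto simp: scalar_def)
  then show ?thesis by (simp add: lscalar_def proj_mult scalar_in_free_alg)
qed

lemma lscalar_one: "lscalar 1 = \<one>\<^bsub>L\<^esub>"
proof -
  have "scalar 1 = (mono [] :: ('v, 'e, 'k) lpa_word_fun)" by (auto simp: scalar_def mono_def)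
  then show ?thesis by (simp add: lscalar_def proj_one)
qed

lemma lscalar_commute:
  assumes "x \<in> carrier L"
  shows "lscalar c \<otimes>\<^bsub>L\<^esub> x = x \<otimes>\<^bsub>L\<^esub> lscalar c"
proof -
  obtain f where f: "f \<in> carrier FA" "x = proj f" using assms carrier_L by auto
  have "word_conv (scalar c) f = word_conv f (scalar c)"
    by (simp add: word_conv_scalar_left word_conv_scalar_right)
  then show ?thesis using f by (simp add: lscalar_def scalar_in_free_alg flip: proj_mult)
qed

lemma lpa_induct_mono:
  assumes mult: "\<And>x y. x \<in> carrier L \<Longrightarrow> y \<in> carrier L \<Longrightarrow> P x \<Longrightarrow> P y \<Longrightarrow> P (x \<otimes>\<^bsub>L\<^esub> y)"
    and one: "P \<one>\<^bsub>L\<^esub>"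
    and generator: "\<And>a. a \<in> lgens V E \<Longrightarrow> P (proj (mono [a]))"
  shows "set w \<subseteq> lgens V E \<Longrightarrow> P (proj (mono w))"
proof (induction w)
  case Nil
  then show ?case using one by (simp add: proj_one)
next
  case (Cons a w)
  then have a: "mono [a] \<in> carrier FA" and w: "mono w \<in> carrier FA"
    by (simp_all add: mono_in_free_alg)
  have "P (proj (mono [a]) \<otimes>\<^bsub>L\<^esub> proj (mono w))"
    using Cons by (intro mult proj_in_L a w generator) simp_all
  then show ?case using proj_mono_Cons[of a w] Cons.prems by simp
qed

lemma lpa_induct:
  assumes "x \<in> carrier L" "P \<zero>\<^bsub>L\<^esub>"
    and add: "\<And>x y. x \<in> carrier L \<Longrightarrow> y \<in> carrier L \<Longrightarrow> P x \<Longrightarrow> P y \<Longrightarrow> P (x \<oplus>\<^bsub>L\<^esub> y)"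
    and mult: "\<And>x y. x \<in> carrier L \<Longrightarrow> y \<in> carrier L \<Longrightarrow> P x \<Longrightarrow> P y \<Longrightarrow> P (x \<otimes>\<^bsub>L\<^esub> y)"
    and scalar: "\<And>c. P (lscalar c)"
    and generator: "\<And>a. a \<in> lgens V E \<Longrightarrow> P (proj (mono [a]))"
  shows "P x"
proof -
  have mono: "P (proj (mono w))" if "set w \<subseteq> lgens V E" for w
    using lpa_induct_mono[OF mult _ generator that] scalar[of 1] by (simp add: lscalar_one)
  obtain f where f: "f \<in> carrier FA" "x = proj f" using assms(1) carrier_L by auto
  define truncate where "truncate T = (\<lambda>u. if u \<in> T then f u else 0)" for T
  have truncated: "truncate T \<in> carrier FA \<and> P (proj (truncate T))"
    if "finite T" "T \<subseteq> {w. f w \<noteq> 0}" for T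
    using that
  proof (induction T rule: finite_induct)
    case empty
    then show ?case using assms(2) by (simp add: truncate_def proj_zero zero_in_free_alg)
  next
    case (insert w T)
    have w: "set w \<subseteq> lgens V E" using insert f by (auto simp: free_alg_carrier)
    have eq: "truncate (insert w T) = (\<lambda>u. truncate T u + word_conv (scalar (f w)) (mono w) u)"
      using insert(2) by (auto simp: truncate_def word_conv_scalar_left mono_def)
    have c: "word_conv (scalar (f w)) (mono w) \<in> carrier FA"
      by (simp add: word_conv_closed scalar_in_free_alg mono_in_free_alg w)
    have "P (lscalar (f w) \<otimes>\<^bsub>L\<^esub> proj (mono w))"
      by (intro mult lscalar_in_L proj_in_L mono_in_free_alg scalar mono w)
    then have "P (proj (word_conv (scalar (f w)) (mono w)))"
      by (simp add: lscalar_def proj_mult scalar_in_free_alg mono_in_free_alg w)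
    moreover have "truncate T \<in> carrier FA" "P (proj (truncate T))" using insert by simp_all
    ultimately show ?case
      unfolding eq using add[OF proj_in_L proj_in_L] c by (simp add: add_in_free_alg proj_add)
  qed
  have "finite {w. f w \<noteq> 0}" using f by (simp add: free_alg_carrier)
  moreover have "truncate {w. f w \<noteq> 0} = f" by (auto simp: truncate_def)
  ultimately show ?thesis using truncated[of "{w. f w \<noteq> 0}"] f by simp
qed

end

section \<open>Nonvanishing of vertices\<close>

type_synonym ('v, 'e) path_state = "'v \<times> (nat \<Rightarrow> 'e option)"

context lpa
begin

definition singular_vertex :: "'v \<Rightarrow> bool" where
  "singular_vertex u \<longleftrightarrow> \<not> (finite {e \<in> E. s e = u} \<and> {e \<in> E. s e = u} \<noteq> {})"

text \<open>A state \<open>(v, p)\<close> lists the edges of a path from \<open>v\<close>; the path is either infinite or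
  stops (\<open>p i = None\<close> from then on) exactly at a singular vertex.\<close>

definition maximal_path :: "('v, 'e) path_state \<Rightarrow> bool" where
  "maximal_path x \<longleftrightarrow> fst x \<in> V \<and> (\<forall>i. snd x i = None \<longrightarrow> snd x (Suc i) = None)
     \<and> (case snd x 0 of None \<Rightarrow> singular_vertex (fst x) | Some e \<Rightarrow> e \<in> E \<and> s e = fst x)
     \<and> (\<forall>i e. snd x i = Some e \<longrightarrow>
          (case snd x (Suc i) of None \<Rightarrow> singular_vertex (r e) | Some f \<Rightarrow> f \<in> E \<and> s f = r e))"

primrec gen_act :: "('v, 'e) lgen \<Rightarrow> ('v, 'e) path_state \<Rightarrow> ('v, 'e) path_state option" where
  "gen_act (Vx u) x = (if fst x = u then Some x else None)"
| "gen_act (Ed e) x = (if snd x 0 = Some e then Some (r e, \<lambda>i. snd x (Suc i)) else None)"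
| "gen_act (Gh e) x =
    (if fst x = r e \<and> e \<in> E then Some (s e, case_nat (Some e) (snd x)) else None)"

primrec word_act :: "('v, 'e) lgen list \<Rightarrow> ('v, 'e) path_state \<Rightarrow> ('v, 'e) path_state option" where
  "word_act [] x = Some x"
| "word_act (g # w) x = (case gen_act g x of None \<Rightarrow> None | Some y \<Rightarrow> word_act w y)"

definition fun_act ::
    "('v, 'e) lgen list \<Rightarrow> (('v, 'e) path_state \<Rightarrow> 'k) \<Rightarrow> ('v, 'e) path_state \<Rightarrow> 'k" where
  "fun_act w \<phi> x = (case word_act w x of None \<Rightarrow> 0 | Some y \<Rightarrow> \<phi> y)"

definition lin_act ::
    "('v, 'e, 'k) lpa_word_fun \<Rightarrow> (('v, 'e) path_state \<Rightarrow> 'k) \<Rightarrow> ('v, 'e) path_state \<Rightarrow> 'k" where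
  "lin_act f \<phi> x = (\<Sum>w\<in>{w. f w \<noteq> 0}. f w * fun_act w \<phi> x)"

lemma maximal_path_tail:
  assumes "maximal_path (v, p)" "p 0 = Some e"
  shows "maximal_path (r e, \<lambda>i. p (Suc i))"
proof -
  have "\<forall>i. p i = None \<longrightarrow> p (Suc i) = None"
    and "case p 0 of None \<Rightarrow> singular_vertex v | Some e \<Rightarrow> e \<in> E \<and> s e = v"
    and step: "\<forall>i e. p i = Some e \<longrightarrow>
      (case p (Suc i) of None \<Rightarrow> singular_vertex (r e) | Some f \<Rightarrow> f \<in> E \<and> s f = r e)"
    using assms(1) unfolding maximal_path_def fst_conv snd_conv by auto
  moreover have "e \<in> E" using calculation(2) assms(2) by simp
  moreover have "case p (Suc 0) of None \<Rightarrow> singular_vertex (r e) | Some f \<Rightarrow> f \<in> E \<and> s f = r e"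
    using step assms(2) by blast
  ultimately show ?thesis
    unfolding maximal_path_def fst_conv snd_conv by (simp add: edge_range_in_V)
qed

lemma maximal_path_prepend:
  assumes "maximal_path (r e, p)" "e \<in> E"
  shows "maximal_path (s e, case_nat (Some e) p)"
proof -
  have "\<forall>i. p i = None \<longrightarrow> p (Suc i) = None"
    and first: "case p 0 of None \<Rightarrow> singular_vertex (r e) | Some f \<Rightarrow> f \<in> E \<and> s f = r e"
    and step: "\<forall>i e. p i = Some e \<longrightarrow>
      (case p (Suc i) of None \<Rightarrow> singular_vertex (r e) | Some f \<Rightarrow> f \<in> E \<and> s f = r e)"
    using assms(1) unfolding maximal_path_def fst_conv snd_conv by auto
  moreover have "case case_nat (Some e) p (Suc i) of
      None \<Rightarrow> singular_vertex (r e') | Some f \<Rightarrow> f \<in> E \<and> s f = r e'"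
    if "case_nat (Some e) p i = Some e'" for i e'
    using that first step by (cases i) (auto split: option.splits)
  ultimately show ?thesis
    unfolding maximal_path_def fst_conv snd_conv using assms(2)
    by (auto simp: edge_source_in_V split: nat.splits)
qed

lemma maximal_path_gen_act: "maximal_path x \<Longrightarrow> gen_act g x = Some y \<Longrightarrow> maximal_path y"
  by (cases g; cases x) (auto intro: maximal_path_tail maximal_path_prepend split: if_splits)

lemma maximal_path_word_act: "maximal_path x \<Longrightarrow> word_act w x = Some y \<Longrightarrow> maximal_path y"
  by (induction w arbitrary: x) (auto intro: maximal_path_gen_act split: option.splits)

lemma word_act_append:
  "word_act (u @ w) x = (case word_act u x of None \<Rightarrow> None | Some y \<Rightarrow> word_act w y)"
  by (induction u arbitrary: x) (auto split: option.splits)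

lemma fun_act_append: "fun_act (u @ w) \<phi> x = fun_act u (fun_act w \<phi>) x"
  by (auto simp: fun_act_def word_act_append split: option.splits)

lemma fun_act_sum:
  "finite G \<Longrightarrow> fun_act u (\<lambda>y. \<Sum>w\<in>G. g w * \<psi> w y) x = (\<Sum>w\<in>G. g w * fun_act u (\<psi> w) x)"
  by (auto simp: fun_act_def split: option.splits)

lemma lin_act_eq_sum:
  assumes "finite W" "{w. f w \<noteq> 0} \<subseteq> W"
  shows "lin_act f \<phi> x = (\<Sum>w\<in>W. f w * fun_act w \<phi> x)"
  unfolding lin_act_def by (rule sum.mono_neutral_left) (use assms in auto)

lemma lin_act_mult:
  assumes f: "f \<in> carrier FA" and g: "g \<in> carrier FA"
  shows "lin_act (word_conv f g) \<phi> x = lin_act f (lin_act g \<phi>) x"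
proof -
  define F where "F = {w. f w \<noteq> 0}"
  define G where "G = {w. g w \<noteq> 0}"
  define FG where "FG = (\<lambda>p. fst p @ snd p) ` (F \<times> G)"
  have fin: "finite F" "finite G" using f g by (auto simp: free_alg_carrier F_def G_def)
  then have "finite FG" by (simp add: FG_def)
  then have "lin_act (word_conv f g) \<phi> x = (\<Sum>w\<in>FG. word_conv f g w * fun_act w \<phi> x)"
    by (rule lin_act_eq_sum) (unfold FG_def F_def G_def, rule word_conv_support)
  also have "\<dots> = (\<Sum>a\<in>F. \<Sum>b\<in>G. f a * g b * fun_act (a @ b) \<phi> x)"
    by (rule word_conv_weighted_sum[OF fin _ _ \<open>finite FG\<close>]) (auto simp: F_def G_def FG_def)
  also have "\<dots> = (\<Sum>a\<in>F. f a * fun_act a (\<lambda>y. \<Sum>b\<in>G. g b * fun_act b \<phi> y) x)"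
    by (simp add: fun_act_sum[OF fin(2)] fun_act_append sum_distrib_left mult.assoc)
  also have "\<dots> = lin_act f (lin_act g \<phi>) x"
    by (simp add: lin_act_def[abs_def] F_def G_def)
  finally show ?thesis .
qed

lemma lin_act_add:
  assumes f: "f \<in> carrier FA" and g: "g \<in> carrier FA"
  shows "lin_act (\<lambda>w. f w + g w) \<phi> x = lin_act f \<phi> x + lin_act g \<phi> x"
proof -
  define W where "W = {w. f w \<noteq> 0} \<union> {w. g w \<noteq> 0}"
  have fin: "finite W" using f g by (auto simp: free_alg_carrier W_def)
  have "lin_act (\<lambda>w. f w + g w) \<phi> x = (\<Sum>w\<in>W. (f w + g w) * fun_act w \<phi> x)"
    by (rule lin_act_eq_sum[OF fin]) (auto simp: W_def)
  also have "\<dots> = (\<Sum>w\<in>W. f w * fun_act w \<phi> x) + (\<Sum>w\<in>W. g w * fun_act w \<phi> x)"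
    by (simp add: distrib_right sum.distrib)
  also have "\<dots> = lin_act f \<phi> x + lin_act g \<phi> x"
    using lin_act_eq_sum[OF fin, of f] lin_act_eq_sum[OF fin, of g] by (auto simp: W_def)
  finally show ?thesis .
qed

lemma lin_act_uminus: "lin_act (\<lambda>w. - f w) \<phi> x = - lin_act f \<phi> x"
  by (simp add: lin_act_def sum_negf)

lemma lin_act_zero: "lin_act (\<lambda>_. 0) \<phi> x = 0"
  by (simp add: lin_act_def)

lemma lin_act_mono: "lin_act (mono u) \<phi> x = fun_act u \<phi> x"
proof -
  have "lin_act (mono u) \<phi> x = (\<Sum>w\<in>{u}. mono u w * fun_act w \<phi> x)"
    by (rule lin_act_eq_sum) (auto simp: mono_def)
  then show ?thesis by (simp add: mono_def)
qed

lemma lin_act_fdiff: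
  "f \<in> carrier FA \<Longrightarrow> g \<in> carrier FA \<Longrightarrow> lin_act (fdiff f g) \<phi> x = lin_act f \<phi> x - lin_act g \<phi> x"
  using lin_act_add[OF _ uminus_in_free_alg, of f g] by (simp add: fdiff_def lin_act_uminus)

lemma lin_act_sum:
  "finite S \<Longrightarrow> (\<And>i. i \<in> S \<Longrightarrow> h i \<in> carrier FA)
    \<Longrightarrow> lin_act (\<lambda>w. \<Sum>i\<in>S. h i w) \<phi> x = (\<Sum>i\<in>S. lin_act (h i) \<phi> x)"
proof (induction S rule: finite_induct)
  case empty
  then show ?case by (simp add: lin_act_zero)
next
  case (insert a S)
  then show ?case
    using lin_act_add[OF _ sum_in_free_alg[OF insert(1)], of "h a" h] by simp
qed

lemma fun_act_simps:
  "fun_act [] \<phi> x = \<phi> x"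
  "fun_act [Vx u] \<phi> x = (if fst x = u then \<phi> x else 0)"
  "fun_act [Vx u, Vx u'] \<phi> x = (if fst x = u \<and> fst x = u' then \<phi> x else 0)"
  by (auto simp: fun_act_def)

definition path_annihilator :: "('v, 'e, 'k) lpa_word_fun set" where
  "path_annihilator = {f \<in> carrier FA. \<forall>\<phi> x. maximal_path x \<longrightarrow> lin_act f \<phi> x = 0}"

lemma ideal_path_annihilator: "ideal path_annihilator FA"
proof (rule idealI[OF free_alg_is_ring])
  interpret FA: ring FA by (rule free_alg_is_ring)
  show "subgroup path_annihilator (add_monoid FA)"
  proof (rule FA.add.subgroupI)
    have "(\<lambda>_. 0) \<in> path_annihilator"
      by (auto simp: path_annihilator_def zero_in_free_alg lin_act_zero)
    then show "path_annihilator \<noteq> {}" by auto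
  qed (auto simp: path_annihilator_def free_alg_minus uminus_in_free_alg lin_act_uminus
      free_alg_add add_in_free_alg lin_act_add)
next
  fix f g assume f: "f \<in> path_annihilator" and g: "g \<in> carrier FA"
  have "lin_act (word_conv g f) \<phi> x = 0" if "maximal_path x" for \<phi> x
  proof -
    have "fun_act w (lin_act f \<phi>) x = 0" for w
      using f maximal_path_word_act[OF that, of w]
      by (auto simp: fun_act_def path_annihilator_def split: option.splits)
    moreover have "lin_act (word_conv g f) \<phi> x = lin_act g (lin_act f \<phi>) x"
      using f g by (simp add: lin_act_mult path_annihilator_def)
    ultimately show ?thesis by (simp add: lin_act_def)
  qed
  then show "g \<otimes>\<^bsub>FA\<^esub> f \<in> path_annihilator"
    using f g by (auto simp: path_annihilator_def free_alg_mult word_conv_closed)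
next
  fix f g assume f: "f \<in> path_annihilator" and g: "g \<in> carrier FA"
  then show "f \<otimes>\<^bsub>FA\<^esub> g \<in> path_annihilator"
    by (auto simp: path_annihilator_def free_alg_mult word_conv_closed lin_act_mult)
qed

lemma lin_act_CK2_relation:
  assumes x: "maximal_path x" and u: "u \<in> V" "finite {e \<in> E. s e = u}" "{e \<in> E. s e = u} \<noteq> {}"
  shows "lin_act (fdiff (mono [Vx u]) (\<lambda>w. \<Sum>e\<in>{e \<in> E. s e = u}. mono [Ed e, Gh e] w)) \<phi> x = 0"
proof -
  obtain v p where xv: "x = (v, p)" by (cases x)
  have first: "case p 0 of None \<Rightarrow> singular_vertex v | Some e \<Rightarrow> e \<in> E \<and> s e = v"
    using x unfolding xv maximal_path_def fst_conv snd_conv by simp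
  define S where "S = {e \<in> E. s e = u}"
  have S: "finite S" "\<And>e. e \<in> S \<Longrightarrow> mono [Ed e, Gh e] \<in> carrier FA"
    using u(2) by (auto simp: S_def mono_in_free_alg)
  have ghost_edge: "fun_act [Ed e, Gh e] \<phi> x = (if p 0 = Some e then \<phi> x else 0)" if "e \<in> E" for e
  proof -
    have "case_nat (Some e) (\<lambda>i. p (Suc i)) = p" if "p 0 = Some e"
      using that by (auto split: nat.splits)
    then show ?thesis using that first xv by (auto simp: fun_act_def)
  qed
  have "lin_act (fdiff (mono [Vx u]) (\<lambda>w. \<Sum>e\<in>S. mono [Ed e, Gh e] w)) \<phi> x
      = fun_act [Vx u] \<phi> x - (\<Sum>e\<in>S. if p 0 = Some e then \<phi> x else 0)"
    using lin_act_fdiff[OF _ sum_in_free_alg[OF S]] lin_act_sum[OF S] u(1)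
    by (simp add: lin_act_mono mono_in_free_alg ghost_edge S_def)
  also have "\<dots> = 0"
  proof (cases "p 0")
    case None
    then have "v \<noteq> u" using first u by (auto simp: singular_vertex_def)
    then show ?thesis using None xv by (simp add: fun_act_simps)
  next
    case (Some e)
    then have "e \<in> E" "s e = v" using first by auto
    then show ?thesis
      using Some xv S(1) by (auto simp: fun_act_simps S_def sum.delta' intro!: sum.neutral)
  qed
  finally show ?thesis by (simp add: S_def)
qed

lemma lin_act_unit_relation:
  assumes "maximal_path x"
  shows "lin_act (fdiff (mono []) (\<lambda>w. \<Sum>v\<in>V. mono [Vx v] w)) \<phi> x = 0"
proof -
  have mono_V: "\<And>v. v \<in> V \<Longrightarrow> mono [Vx v] \<in> carrier FA" by (simp add: mono_in_free_alg)
  have "fst x \<in> V" using assms by (simp add: maximal_path_def)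
  then show ?thesis
    using lin_act_fdiff[OF _ sum_in_free_alg[OF finite_V mono_V]] lin_act_sum[OF finite_V mono_V]
    by (simp add: lin_act_mono fun_act_simps mono_in_free_alg finite_V sum.delta)
qed

lemma lin_act_relation:
  assumes q: "q \<in> lpa_rels V E r s" and x: "maximal_path x"
  shows "lin_act q \<phi> x = 0"
proof -
  obtain v p where xv: "x = (v, p)" by (cases x)
  have first: "case p 0 of None \<Rightarrow> singular_vertex v | Some e \<Rightarrow> e \<in> E \<and> s e = v"
    using x unfolding xv maximal_path_def fst_conv snd_conv by simp
  note simps = lin_act_fdiff lin_act_mono lin_act_zero mono_in_free_alg zero_in_free_alg
    edge_range_in_V edge_source_in_V
  from q show ?thesis
    unfolding lpa_rels_def
  proof (elim UnE CollectE exE conjE singletonE)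
    fix v1 v2 assume "q = fdiff (mono [Vx v1, Vx v2]) (if v1 = v2 then mono [Vx v1] else (\<lambda>_. 0))"
      "v1 \<in> V" "v2 \<in> V"
    then show ?thesis by (auto simp: simps fun_act_simps)
  next
    fix e assume "q = fdiff (mono [Vx (s e), Ed e]) (mono [Ed e])" "e \<in> E"
    then show ?thesis using first xv by (auto simp: simps fun_act_def split: option.splits)
  next
    fix e assume "q = fdiff (mono [Ed e, Vx (r e)]) (mono [Ed e])" "e \<in> E"
    then show ?thesis by (auto simp: simps fun_act_def split: option.splits)
  next
    fix e assume "q = fdiff (mono [Vx (r e), Gh e]) (mono [Gh e])" "e \<in> E"
    then show ?thesis by (auto simp: simps fun_act_def split: option.splits)
  next
    fix e assume "q = fdiff (mono [Gh e, Vx (s e)]) (mono [Gh e])" "e \<in> E"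
    then show ?thesis by (auto simp: simps fun_act_def split: option.splits)
  next
    fix e f assume "q = fdiff (mono [Gh e, Ed f]) (if e = f then mono [Vx (r e)] else (\<lambda>_. 0))"
      "e \<in> E" "f \<in> E"
    then show ?thesis using xv by (auto simp: simps fun_act_def split: option.splits)
  next
    fix u assume "q = fdiff (mono [Vx u]) (\<lambda>w. \<Sum>e\<in>{e\<in>E. s e = u}. mono [Ed e, Gh e] w)"
      "u \<in> V" "finite {e\<in>E. s e = u}" "{e\<in>E. s e = u} \<noteq> {}"
    then show ?thesis using lin_act_CK2_relation x by simp
  next
    assume "q = fdiff (mono []) (\<lambda>w. \<Sum>v\<in>V. mono [Vx v] w)"
    then show ?thesis using lin_act_unit_relation x by simp
  qed
qed

lemma lpa_rels_in_path_annihilator: "lpa_rels V E r s \<subseteq> path_annihilator"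
  using lpa_rels_in_FA lin_act_relation by (auto simp: path_annihilator_def)

definition next_edge :: "'v \<Rightarrow> 'e option" where
  "next_edge u = (if singular_vertex u then None else Some (SOME e. e \<in> E \<and> s e = u))"

primrec greedy_vertex :: "'v \<Rightarrow> nat \<Rightarrow> 'v" where
  "greedy_vertex u 0 = u"
| "greedy_vertex u (Suc i) =
    (case next_edge (greedy_vertex u i) of None \<Rightarrow> greedy_vertex u i | Some e \<Rightarrow> r e)"

lemma next_edge_cases:
  "case next_edge u of None \<Rightarrow> singular_vertex u | Some f \<Rightarrow> f \<in> E \<and> s f = u"
proof (cases "singular_vertex u")
  case True
  then show ?thesis by (simp add: next_edge_def)
next
  case False
  then have "\<exists>e. e \<in> E \<and> s e = u" unfolding singular_vertex_def by blast
  from someI_ex[OF this] False show ?thesis by (simp add: next_edge_def)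
qed

lemma maximal_path_greedy: "u \<in> V \<Longrightarrow> maximal_path (u, \<lambda>i. next_edge (greedy_vertex u i))"
  unfolding maximal_path_def fst_conv snd_conv
proof (intro conjI allI impI)
  fix i assume "next_edge (greedy_vertex u i) = None"
  then show "next_edge (greedy_vertex u (Suc i)) = None"
    by (simp only: greedy_vertex.simps(2) option.case(1))
next
  show "case next_edge (greedy_vertex u 0) of None \<Rightarrow> singular_vertex u | Some e \<Rightarrow> e \<in> E \<and> s e = u"
    using next_edge_cases[of u] by (simp only: greedy_vertex.simps(1))
next
  fix i e assume "next_edge (greedy_vertex u i) = Some e"
  then have "greedy_vertex u (Suc i) = r e" by (simp only: greedy_vertex.simps(2) option.case(2))
  then show "case next_edge (greedy_vertex u (Suc i)) of
      None \<Rightarrow> singular_vertex (r e) | Some f \<Rightarrow> f \<in> E \<and> s f = r e"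
    using next_edge_cases[of "r e"] by (simp only:)
qed

lemma vtx_nonzero:
  assumes "u \<in> V"
  shows "vtx u \<noteq> \<zero>\<^bsub>L\<^esub>"
proof
  assume "vtx u = \<zero>\<^bsub>L\<^esub>"
  then have "mono [Vx u] \<in> J" using assms by (simp add: vtx_def proj_eq_zero_iff mono_in_free_alg)
  also have "J \<subseteq> path_annihilator"
    by (rule ring.genideal_minimal[OF free_alg_is_ring ideal_path_annihilator
          lpa_rels_in_path_annihilator])
  finally have "lin_act (mono [Vx u]) (\<lambda>_. 1) (u, \<lambda>i. next_edge (greedy_vertex u i)) = 0"
    using maximal_path_greedy[OF assms] by (simp add: path_annihilator_def)
  then show False by (simp add: lin_act_mono fun_act_simps)
qed

end

section \<open>Sanov's ping-pong argument\<close>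

text \<open>A letter \<open>(b, sign)\<close> stands for \<open>u\<^sup>\<plusminus>\<^sup>1\<close> if \<open>b\<close> and \<open>w\<^sup>\<plusminus>\<^sup>1\<close> otherwise, where
  \<open>u = [[1, 2], [0, 1]]\<close> and \<open>w = [[1, 0], [2, 1]]\<close> act on column vectors of \<open>\<int>\<^sup>2\<close>.\<close>

fun sanov_act :: "bool \<times> bool \<Rightarrow> int \<times> int \<Rightarrow> int \<times> int" where
  "sanov_act (True, True) (x, y) = (x + 2 * y, y)"
| "sanov_act (True, False) (x, y) = (x - 2 * y, y)"
| "sanov_act (False, True) (x, y) = (x, y + 2 * x)"
| "sanov_act (False, False) (x, y) = (x, y - 2 * x)"

definition sanov_word_act :: "(bool \<times> bool) list \<Rightarrow> int \<times> int \<Rightarrow> int \<times> int" where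
  "sanov_word_act ls v = foldr sanov_act ls v"

fun freely_reduced :: "(bool \<times> bool) list \<Rightarrow> bool" where
  "freely_reduced (a # b # ls) \<longleftrightarrow> (fst a = fst b \<longrightarrow> snd a = snd b) \<and> freely_reduced (b # ls)"
| "freely_reduced _ \<longleftrightarrow> True"

definition x_dominant :: "(int \<times> int) set" where
  "x_dominant = {(x, y). \<bar>y\<bar> < \<bar>x\<bar>}"

definition y_dominant :: "(int \<times> int) set" where
  "y_dominant = {(x, y). \<bar>x\<bar> < \<bar>y\<bar>}"

fun target_region :: "bool \<times> bool \<Rightarrow> (int \<times> int) set" where
  "target_region (True, True) = {(x, y). \<bar>y\<bar> < \<bar>x\<bar> \<and> 0 \<le> x * y}"
| "target_region (True, False) = {(x, y). \<bar>y\<bar> < \<bar>x\<bar> \<and> x * y \<le> 0}"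
| "target_region (False, True) = {(x, y). \<bar>x\<bar> < \<bar>y\<bar> \<and> 0 \<le> x * y}"
| "target_region (False, False) = {(x, y). \<bar>x\<bar> < \<bar>y\<bar> \<and> x * y \<le> 0}"

definition source_region :: "bool \<times> bool \<Rightarrow> (int \<times> int) set" where
  "source_region l = (if fst l then y_dominant else x_dominant)"

lemma sanov_act_target_region:
  "v \<in> source_region l \<union> target_region l \<Longrightarrow> sanov_act l v \<in> target_region l"
  by (cases v; cases l; rename_tac x y a b; case_tac a; case_tac b)
     (auto simp: source_region_def x_dominant_def y_dominant_def zero_le_mult_iff mult_le_0_iff)

lemma target_region_subset_source_region: "fst l \<noteq> fst l' \<Longrightarrow> target_region l' \<subseteq> source_region l"
  by (cases l; cases l'; rename_tac a b c d; case_tac a; case_tac b; case_tac c; case_tac d)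
     (auto simp: source_region_def x_dominant_def y_dominant_def)

lemma target_region_dominant: "target_region l \<subseteq> (if fst l then x_dominant else y_dominant)"
  by (cases l; rename_tac a b; case_tac a; case_tac b) (auto simp: x_dominant_def y_dominant_def)

lemma sanov_act_inverse: "sanov_act (fst l, \<not> snd l) (sanov_act l v) = v"
  by (cases v; cases l; rename_tac x y a b; case_tac a; case_tac b) auto

lemma sanov_word_act_target_region:
  "freely_reduced (l # ls) \<Longrightarrow> v \<in> source_region (last (l # ls))
    \<Longrightarrow> sanov_word_act (l # ls) v \<in> target_region l"
proof (induction ls arbitrary: l)
  case Nil
  then show ?case using sanov_act_target_region[of v l] by (simp add: sanov_word_act_def)
next
  case (Cons l' ls)
  have "sanov_word_act (l' # ls) v \<in> target_region l'" using Cons by simp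
  moreover have "target_region l' \<subseteq> source_region l \<union> target_region l"
  proof (cases "fst l = fst l'")
    case True
    then have "l = l'" using Cons.prems(1) by (simp add: prod_eq_iff)
    then show ?thesis by blast
  next
    case False
    then show ?thesis using target_region_subset_source_region[of l l'] by blast
  qed
  ultimately have "sanov_act l (sanov_word_act (l' # ls) v) \<in> target_region l"
    using sanov_act_target_region by blast
  then show ?case by (simp add: sanov_word_act_def)
qed

lemma freely_reduced_snoc:
  "freely_reduced (xs @ [y]) \<longleftrightarrow>
    freely_reduced xs \<and> (xs \<noteq> [] \<longrightarrow> fst (last xs) = fst y \<longrightarrow> snd (last xs) = snd y)"
  by (induction xs rule: freely_reduced.induct) auto

lemma sanov_word_act_nontrivial_same_ends:
  assumes "freely_reduced ls" "ls \<noteq> []" "fst (hd ls) = fst (last ls)"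
  shows "\<exists>v. sanov_word_act ls v \<noteq> v"
proof -
  obtain l ls' where ls: "ls = l # ls'" using assms(2) by (cases ls) auto
  define v where "v = (if fst (last ls) then (0::int, 1::int) else (1, 0))"
  have "v \<in> source_region (last ls)"
    by (auto simp: v_def source_region_def x_dominant_def y_dominant_def)
  then have "sanov_word_act ls v \<in> target_region l"
    using sanov_word_act_target_region assms ls by auto
  then have "sanov_word_act ls v \<in> (if fst l then x_dominant else y_dominant)"
    using target_region_dominant by blast
  moreover have "v \<notin> (if fst l then x_dominant else y_dominant)"
    using assms(3) ls by (auto simp: v_def x_dominant_def y_dominant_def)
  ultimately show ?thesis by metis
qed

text \<open>If the first and last letters involve different generators, conjugating by the
  last letter reduces to the previous lemma.\<close>

lemma sanov_word_act_nontrivial: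
  assumes "freely_reduced ls" "ls \<noteq> []"
  shows "\<exists>v. sanov_word_act ls v \<noteq> v"
proof (cases "fst (hd ls) = fst (last ls)")
  case True
  then show ?thesis using sanov_word_act_nontrivial_same_ends assms by blast
next
  case False
  define l where "l = last ls"
  define ls' where "ls' = (fst l, \<not> snd l) # ls @ [l]"
  have "freely_reduced (ls @ [l])" using assms by (simp add: freely_reduced_snoc l_def)
  then have "freely_reduced ls'" using False assms(2) by (cases ls) (auto simp: ls'_def l_def)
  then obtain v where v: "sanov_word_act ls' v \<noteq> v"
    using sanov_word_act_nontrivial_same_ends[of ls'] by (auto simp: ls'_def)
  have "sanov_word_act ls' v = sanov_act (fst l, \<not> snd l) (sanov_word_act ls (sanov_act l v))"
    by (simp add: ls'_def sanov_word_act_def)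
  then have "sanov_word_act ls (sanov_act l v) \<noteq> sanov_act l v"
    using v sanov_act_inverse by metis
  then show ?thesis by blast
qed

lemma word_eval_Cons:
  "word_eval G ((b, e) # ws) = (if e then b else inv\<^bsub>G\<^esub> b) \<otimes>\<^bsub>G\<^esub> word_eval G ws"
  by (simp add: word_eval_def)

lemma (in group) word_eval_closed:
  "set (map fst ws) \<subseteq> carrier G \<Longrightarrow> word_eval G ws \<in> carrier G"
  by (induction ws) (auto simp: word_eval_def)

lemma all_Suc_less_length_Cons:
  "(\<forall>i. Suc i < length (x # xs) \<longrightarrow> P i)
    \<longleftrightarrow> (xs \<noteq> [] \<longrightarrow> P 0) \<and> (\<forall>i. Suc i < length xs \<longrightarrow> P (Suc i))"
  by (cases xs) (auto simp: less_Suc_eq_0_disj)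

lemma reduced_word_Cons_Cons:
  "reduced_word (a # b # ws) \<longleftrightarrow> \<not> (fst a = fst b \<and> snd a \<noteq> snd b) \<and> reduced_word (b # ws)"
  unfolding reduced_word_def all_Suc_less_length_Cons[of a] by simp

lemma (in group) commutator_word_eval:
  assumes "x \<in> carrier G" "y \<in> carrier G" "x \<otimes> y = y \<otimes> x"
  shows "word_eval G [(x, True), (y, True), (x, False), (y, False)] = \<one>"
proof -
  have "word_eval G [(x, True), (y, True), (x, False), (y, False)] = (x \<otimes> y) \<otimes> (inv x \<otimes> inv y)"
    using assms(1,2) by (simp add: word_eval_def m_assoc)
  also have "\<dots> = (y \<otimes> x) \<otimes> (inv x \<otimes> inv y)"
    using assms(3) by (simp only:)
  also have "\<dots> = y \<otimes> (x \<otimes> (inv x \<otimes> inv y))"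
    using assms(1,2) by (simp add: m_assoc)
  also have "x \<otimes> (inv x \<otimes> inv y) = inv y"
    using assms by (simp add: m_assoc[symmetric])
  also have "y \<otimes> inv y = \<one>"
    using assms by simp
  finally show ?thesis .
qed

lemma (in group) free_noncyclic_if_free_basis_pair:
  assumes basis: "free_basis G {u, w}" and "u \<noteq> w"
  shows "free_subgroup G (generate G {u, w}) \<and> \<not> cyclic_subgroup G (generate G {u, w})"
proof
  have uw: "u \<in> carrier G" "w \<in> carrier G" using basis by (auto simp: free_basis_def)
  show "free_subgroup G (generate G {u, w})"
    using basis uw by (auto simp: free_subgroup_def intro: generate_is_subgroup)
  show "\<not> cyclic_subgroup G (generate G {u, w})"
  proof
    assume "cyclic_subgroup G (generate G {u, w})"
    then obtain g where g: "g \<in> carrier G" "generate G {u, w} = generate G {g}"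
      by (auto simp: cyclic_subgroup_def)
    have "u \<in> generate G {g}" "w \<in> generate G {g}" unfolding g(2)[symmetric]
      by (auto intro: generate.incl)
    then obtain i j :: int where "u = g [^] i" "w = g [^] j"
      using generate_pow[OF g(1)] by auto
    then have "u \<otimes> w = w \<otimes> u"
      using int_pow_mult[OF g(1), of i j] int_pow_mult[OF g(1), of j i] by (simp add: add.commute)
    then have "word_eval G [(u, True), (w, True), (u, False), (w, False)] = \<one>"
      using commutator_word_eval uw by blast
    moreover have "reduced_word [(u, True), (w, True), (u, False), (w, False)]"
      using \<open>u \<noteq> w\<close> by (auto simp: reduced_word_def less_Suc_eq nth_Cons split: nat.splits)
    ultimately show False using basis by (auto simp: free_basis_def)
  qed
qed

section \<open>Matrix units and Sanov's subgroup\<close>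

text \<open>These are the relations among the matrix units \<open>e11, e12, e21\<close> of \<open>K\<^sup>2\<^sup>\<times>\<^sup>2\<close> that make
  \<open>1 + c E12\<close> and \<open>1 + c E21\<close> act on the "column vectors" \<open>a E11 + b E21\<close> as the elementary
  matrices act on \<open>(a, b)\<close>.\<close>

locale matrix_units = ring R for R (structure) +
  fixes emb :: "'k::field_char_0 \<Rightarrow> 'a" and E11 E12 E21 :: 'a
  assumes emb_closed [simp]: "emb c \<in> carrier R"
    and emb_add: "emb (c + d) = emb c \<oplus> emb d"
    and emb_mult: "emb (c * d) = emb c \<otimes> emb d"
    and emb_one: "emb 1 = \<one>"
    and emb_central: "x \<in> carrier R \<Longrightarrow> emb c \<otimes> x = x \<otimes> emb c"
    and matrix_units_closed [simp]: "E11 \<in> carrier R" "E12 \<in> carrier R" "E21 \<in> carrier R"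
    and E12_E11: "E12 \<otimes> E11 = \<zero>" and E12_E21: "E12 \<otimes> E21 = E11" and E12_E12: "E12 \<otimes> E12 = \<zero>"
    and E21_E11: "E21 \<otimes> E11 = E21" and E21_E21: "E21 \<otimes> E21 = \<zero>"
    and E11_E11: "E11 \<otimes> E11 = E11" and E11_E21: "E11 \<otimes> E21 = \<zero>"
    and E11_nonzero: "E11 \<noteq> \<zero>"
begin

lemma emb_zero: "emb 0 = \<zero>"
proof -
  have "emb 0 \<oplus> emb 0 = emb 0 \<oplus> \<zero>" using emb_add[of 0 0] by simp
  then show ?thesis by (metis add.l_cancel emb_closed zero_closed)
qed

lemma emb_mult_emb_mult:
  assumes "x \<in> carrier R" "y \<in> carrier R"
  shows "(emb c \<otimes> x) \<otimes> (emb d \<otimes> y) = emb (c * d) \<otimes> (x \<otimes> y)"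
proof -
  have "(emb c \<otimes> x) \<otimes> (emb d \<otimes> y) = emb c \<otimes> ((x \<otimes> emb d) \<otimes> y)"
    using assms by (simp add: m_assoc)
  also have "\<dots> = emb c \<otimes> ((emb d \<otimes> x) \<otimes> y)"
    using assms by (simp add: emb_central)
  also have "\<dots> = emb (c * d) \<otimes> (x \<otimes> y)"
    using assms by (simp add: m_assoc emb_mult)
  finally show ?thesis .
qed

lemma emb_add_mult: "x \<in> carrier R \<Longrightarrow> emb (c + d) \<otimes> x = emb c \<otimes> x \<oplus> emb d \<otimes> x"
  by (simp add: emb_add l_distr)

lemma emb_mult_E11_eq_zero: "emb c \<otimes> E11 = \<zero> \<Longrightarrow> c = 0"
proof (rule ccontr)
  assume zero: "emb c \<otimes> E11 = \<zero>" and "c \<noteq> 0"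
  then have "E11 = emb (inverse c * c) \<otimes> E11" by (simp add: emb_one)
  also have "\<dots> = emb (inverse c) \<otimes> (emb c \<otimes> E11)" by (simp add: emb_mult m_assoc)
  finally show False using zero E11_nonzero by simp
qed

lemma emb_mult_E11_inj: "emb c \<otimes> E11 = emb d \<otimes> E11 \<Longrightarrow> c = d"
  using emb_add_mult[of E11 "c - d" d] emb_mult_E11_eq_zero[of "c - d"]
  by (simp add: add.r_cancel_one')

definition column :: "'k \<Rightarrow> 'k \<Rightarrow> 'a" where
  "column a b = emb a \<otimes> E11 \<oplus> emb b \<otimes> E21"

lemma column_closed [simp]: "column a b \<in> carrier R"
  by (simp add: column_def)

lemma E11_mult_column: "E11 \<otimes> column a b = emb a \<otimes> E11"
proof -
  have "E11 \<otimes> column a b = (emb 1 \<otimes> E11) \<otimes> (emb a \<otimes> E11) \<oplus> (emb 1 \<otimes> E11) \<otimes> (emb b \<otimes> E21)"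
    by (simp add: column_def r_distr emb_one)
  also have "\<dots> = emb a \<otimes> E11"
    by (simp only: emb_mult_emb_mult matrix_units_closed E11_E11 E11_E21) simp
  finally show ?thesis .
qed

lemma E12_mult_column: "E12 \<otimes> column a b = emb b \<otimes> E11"
proof -
  have "E12 \<otimes> column a b = (emb 1 \<otimes> E12) \<otimes> (emb a \<otimes> E11) \<oplus> (emb 1 \<otimes> E12) \<otimes> (emb b \<otimes> E21)"
    by (simp add: column_def r_distr emb_one)
  also have "\<dots> = emb b \<otimes> E11"
    by (simp only: emb_mult_emb_mult matrix_units_closed E12_E11 E12_E21) simp
  finally show ?thesis .
qed

lemma column_inj: "column a b = column c d \<Longrightarrow> a = c \<and> b = d"
  by (metis E11_mult_column E12_mult_column emb_mult_E11_inj)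

definition upper :: "'k \<Rightarrow> 'a" where
  "upper c = \<one> \<oplus> emb c \<otimes> E12"

definition lower :: "'k \<Rightarrow> 'a" where
  "lower c = \<one> \<oplus> emb c \<otimes> E21"

lemma upper_closed [simp]: "upper c \<in> carrier R" and lower_closed [simp]: "lower c \<in> carrier R"
  by (simp_all add: upper_def lower_def)

lemma upper_mult_column: "upper c \<otimes> column a b = column (a + c * b) b"
proof -
  have "upper c \<otimes> column a b
      = column a b \<oplus> (emb c \<otimes> E12) \<otimes> (emb a \<otimes> E11) \<oplus> (emb c \<otimes> E12) \<otimes> (emb b \<otimes> E21)"
    by (simp add: upper_def column_def l_distr r_distr a_ac)
  also have "\<dots> = column a b \<oplus> emb (c * b) \<otimes> E11"
    by (simp only: emb_mult_emb_mult matrix_units_closed E12_E11 E12_E21) simp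
  also have "\<dots> = column (a + c * b) b" by (simp add: column_def emb_add_mult a_ac)
  finally show ?thesis .
qed

lemma lower_mult_column: "lower c \<otimes> column a b = column a (b + c * a)"
proof -
  have "lower c \<otimes> column a b
      = column a b \<oplus> (emb c \<otimes> E21) \<otimes> (emb a \<otimes> E11) \<oplus> (emb c \<otimes> E21) \<otimes> (emb b \<otimes> E21)"
    by (simp add: lower_def column_def l_distr r_distr a_ac)
  also have "\<dots> = column a b \<oplus> emb (c * a) \<otimes> E21"
    by (simp only: emb_mult_emb_mult matrix_units_closed E21_E11 E21_E21) simp
  also have "\<dots> = column a (b + c * a)" by (simp add: column_def emb_add_mult a_ac)
  finally show ?thesis .
qed

lemma upper_mult_upper: "upper c \<otimes> upper d = upper (c + d)"
proof -
  have "upper c \<otimes> upper d = \<one> \<oplus> emb d \<otimes> E12 \<oplus> emb c \<otimes> E12 \<oplus> (emb c \<otimes> E12) \<otimes> (emb d \<otimes> E12)"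
    by (simp add: upper_def l_distr r_distr a_ac)
  also have "\<dots> = \<one> \<oplus> emb d \<otimes> E12 \<oplus> emb c \<otimes> E12"
    by (simp only: emb_mult_emb_mult matrix_units_closed E12_E12) simp
  also have "\<dots> = upper (c + d)" by (simp add: upper_def emb_add_mult a_ac)
  finally show ?thesis .
qed

lemma lower_mult_lower: "lower c \<otimes> lower d = lower (c + d)"
proof -
  have "lower c \<otimes> lower d = \<one> \<oplus> emb d \<otimes> E21 \<oplus> emb c \<otimes> E21 \<oplus> (emb c \<otimes> E21) \<otimes> (emb d \<otimes> E21)"
    by (simp add: lower_def l_distr r_distr a_ac)
  also have "\<dots> = \<one> \<oplus> emb d \<otimes> E21 \<oplus> emb c \<otimes> E21"
    by (simp only: emb_mult_emb_mult matrix_units_closed E21_E21) simp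
  also have "\<dots> = lower (c + d)" by (simp add: lower_def emb_add_mult a_ac)
  finally show ?thesis .
qed

lemma upper_zero: "upper 0 = \<one>" and lower_zero: "lower 0 = \<one>"
  by (simp_all add: upper_def lower_def emb_zero)

lemma upper_Units: "upper c \<in> Units R" and inv_upper: "inv (upper c) = upper (- c)"
proof -
  have "upper c \<otimes> upper (- c) = \<one>" "upper (- c) \<otimes> upper c = \<one>"
    by (simp_all add: upper_mult_upper upper_zero)
  then show "upper c \<in> Units R" "inv (upper c) = upper (- c)"
    by (auto simp: Units_def intro: inv_char)
qed

lemma lower_Units: "lower c \<in> Units R" and inv_lower: "inv (lower c) = lower (- c)"
proof -
  have "lower c \<otimes> lower (- c) = \<one>" "lower (- c) \<otimes> lower c = \<one>"
    by (simp_all add: lower_mult_lower lower_zero)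
  then show "lower c \<in> Units R" "inv (lower c) = lower (- c)"
    by (auto simp: Units_def intro: inv_char)
qed

lemma upper_neq_lower: "upper 2 \<noteq> lower 2"
proof
  assume "upper 2 = lower 2"
  then have "column (0 + 2 * 1) 1 = column 0 (1 + 2 * 0)"
    by (metis upper_mult_column lower_mult_column)
  then show False using column_inj by fastforce
qed

definition int_column :: "int \<times> int \<Rightarrow> 'a" where
  "int_column v = column (of_int (fst v)) (of_int (snd v))"

lemma int_column_inj: "int_column v = int_column v' \<Longrightarrow> v = v'"
  by (auto simp: int_column_def prod_eq_iff dest!: column_inj)

abbreviation sanov_label :: "'a \<times> bool \<Rightarrow> bool \<times> bool" where
  "sanov_label p \<equiv> (fst p = upper 2, snd p)"

lemma word_eval_mult_int_column:
  assumes "set (map fst ws) \<subseteq> {upper 2, lower 2}"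
  shows "word_eval (units_of R) ws \<otimes> int_column v
    = int_column (sanov_word_act (map sanov_label ws) v)"
  using assms
proof (induction ws)
  case Nil
  then show ?case by (simp add: word_eval_def units_of_one sanov_word_act_def int_column_def)
next
  case (Cons a ws)
  obtain b e where a: "a = (b, e)" by (cases a)
  interpret U: group "units_of R" by (rule units_group)
  have "set (map fst ws) \<subseteq> carrier (units_of R)"
    using Cons.prems by (auto simp: units_of_carrier upper_Units lower_Units)
  then have ws: "word_eval (units_of R) ws \<in> carrier R"
    using U.word_eval_closed by (auto simp: units_of_carrier)
  obtain x y where xy: "sanov_word_act (map sanov_label ws) v = (x, y)" by fastforce
  have b: "b = upper 2 \<or> b = lower 2" using Cons.prems a by auto
  define g where "g = (if e then b else inv\<^bsub>units_of R\<^esub> b)"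
  have inv_b: "inv\<^bsub>units_of R\<^esub> b = (if b = upper 2 then upper (- 2) else lower (- 2))"
    using b upper_neq_lower
    by (auto simp: units_of_inv upper_Units lower_Units inv_upper inv_lower)
  have g: "g \<in> carrier R" using b by (auto simp: g_def inv_b)
  have "word_eval (units_of R) (a # ws) \<otimes> int_column v
      = g \<otimes> (word_eval (units_of R) ws \<otimes> int_column v)"
    using g ws
    by (simp add: a word_eval_Cons g_def[symmetric] units_of_mult m_assoc int_column_def)
  also have "\<dots> = g \<otimes> int_column (x, y)" using Cons xy by simp
  also have "\<dots> = int_column (sanov_act (b = upper 2, e) (x, y))"
    using b upper_neq_lower
    by (cases e)
       (auto simp: g_def inv_b int_column_def upper_mult_column lower_mult_column algebra_simps)
  finally show ?case by (simp add: a sanov_word_act_def xy[unfolded sanov_word_act_def])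
qed

lemma freely_reduced_sanov_labels:
  "reduced_word ws \<Longrightarrow> set (map fst ws) \<subseteq> {upper 2, lower 2} \<Longrightarrow> freely_reduced (map sanov_label ws)"
proof (induction ws rule: induct_list012)
  case (3 a b ws)
  then have "fst a = fst b" if "fst a = upper 2 \<longleftrightarrow> fst b = upper 2" using that by auto
  then show ?case using 3 by (auto simp: reduced_word_Cons_Cons)
qed auto

lemma free_basis_upper_lower: "free_basis (units_of R) {upper 2, lower 2}"
  unfolding free_basis_def
proof (intro conjI allI impI)
  show "{upper 2, lower 2} \<subseteq> carrier (units_of R)"
    by (simp add: units_of_carrier upper_Units lower_Units)
  fix ws :: "('a \<times> bool) list"
  assume ws: "ws \<noteq> [] \<and> set (map fst ws) \<subseteq> {upper 2, lower 2} \<and> reduced_word ws"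
  then have "freely_reduced (map sanov_label ws)" "map sanov_label ws \<noteq> []"
    by (simp_all add: freely_reduced_sanov_labels)
  then obtain v where "sanov_word_act (map sanov_label ws) v \<noteq> v"
    using sanov_word_act_nontrivial by blast
  then have "int_column (sanov_word_act (map sanov_label ws) v) \<noteq> int_column v"
    using int_column_inj by blast
  then have "word_eval (units_of R) ws \<otimes> int_column v \<noteq> int_column v"
    using ws word_eval_mult_int_column[of ws v] by simp
  then show "word_eval (units_of R) ws \<noteq> \<one>\<^bsub>units_of R\<^esub>"
    by (auto simp: units_of_one int_column_def)
qed

lemma exists_free_noncyclic_units:
  "\<exists>H. free_subgroup (units_of R) H \<and> \<not> cyclic_subgroup (units_of R) H"
  using group.free_noncyclic_if_free_basis_pair[OF units_group free_basis_upper_lower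
      upper_neq_lower] by blast

end

section \<open>Noncommutative Leavitt path algebras\<close>

lemma (in ring) mult_regroup:
  "x \<in> carrier R \<Longrightarrow> y \<in> carrier R \<Longrightarrow> z \<in> carrier R \<Longrightarrow> w \<in> carrier R
    \<Longrightarrow> (x \<otimes> y) \<otimes> (z \<otimes> w) = x \<otimes> (y \<otimes> z) \<otimes> w"
  by (simp add: m_assoc)

context lpa
begin

lemma vtx_mult_edg:
  assumes "v \<in> V" "e \<in> E"
  shows "vtx v \<otimes>\<^bsub>L\<^esub> edg e = (if v = s e then edg e else \<zero>\<^bsub>L\<^esub>)"
proof -
  have "vtx v \<otimes>\<^bsub>L\<^esub> edg e = (vtx v \<otimes>\<^bsub>L\<^esub> vtx (s e)) \<otimes>\<^bsub>L\<^esub> edg e"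
    using assms vtx_source_mult_edg[of e] by (simp add: generators_in_L L.m_assoc)
  then show ?thesis using assms vtx_mult_vtx[of v "s e"] vtx_source_mult_edg[of e]
    by (simp add: generators_in_L)
qed

lemma edg_mult_vtx:
  assumes "v \<in> V" "e \<in> E"
  shows "edg e \<otimes>\<^bsub>L\<^esub> vtx v = (if v = r e then edg e else \<zero>\<^bsub>L\<^esub>)"
proof -
  have "edg e \<otimes>\<^bsub>L\<^esub> vtx v = edg e \<otimes>\<^bsub>L\<^esub> (vtx (r e) \<otimes>\<^bsub>L\<^esub> vtx v)"
    using assms edg_mult_vtx_range[of e] by (simp add: generators_in_L L.m_assoc[symmetric])
  then show ?thesis using assms vtx_mult_vtx[of "r e" v] edg_mult_vtx_range[of e]
    by (auto simp: generators_in_L)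
qed

lemma vtx_mult_ghost:
  assumes "v \<in> V" "e \<in> E"
  shows "vtx v \<otimes>\<^bsub>L\<^esub> ghost e = (if v = r e then ghost e else \<zero>\<^bsub>L\<^esub>)"
proof -
  have "vtx v \<otimes>\<^bsub>L\<^esub> ghost e = (vtx v \<otimes>\<^bsub>L\<^esub> vtx (r e)) \<otimes>\<^bsub>L\<^esub> ghost e"
    using assms vtx_range_mult_ghost[of e] by (simp add: generators_in_L L.m_assoc)
  then show ?thesis using assms vtx_mult_vtx[of v "r e"] vtx_range_mult_ghost[of e]
    by (simp add: generators_in_L)
qed

lemma ghost_mult_vtx:
  assumes "v \<in> V" "e \<in> E"
  shows "ghost e \<otimes>\<^bsub>L\<^esub> vtx v = (if v = s e then ghost e else \<zero>\<^bsub>L\<^esub>)"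
proof -
  have "ghost e \<otimes>\<^bsub>L\<^esub> vtx v = ghost e \<otimes>\<^bsub>L\<^esub> (vtx (s e) \<otimes>\<^bsub>L\<^esub> vtx v)"
    using assms ghost_mult_vtx_source[of e] by (simp add: generators_in_L L.m_assoc[symmetric])
  then show ?thesis using assms vtx_mult_vtx[of "s e" v] ghost_mult_vtx_source[of e]
    by (auto simp: generators_in_L)
qed

lemma edg_mult_edg_eq_zero:
  assumes "e \<in> E" "f \<in> E" "r e \<noteq> s f"
  shows "edg e \<otimes>\<^bsub>L\<^esub> edg f = \<zero>\<^bsub>L\<^esub>"
proof -
  have "edg e \<otimes>\<^bsub>L\<^esub> edg f = edg e \<otimes>\<^bsub>L\<^esub> (vtx (r e) \<otimes>\<^bsub>L\<^esub> edg f)"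
    using assms edg_mult_vtx_range[of e] by (simp add: generators_in_L L.m_assoc[symmetric])
  then show ?thesis using assms by (simp add: vtx_mult_edg generators_in_L)
qed

lemma ghost_mult_ghost_eq_zero:
  assumes "e \<in> E" "f \<in> E" "s e \<noteq> r f"
  shows "ghost e \<otimes>\<^bsub>L\<^esub> ghost f = \<zero>\<^bsub>L\<^esub>"
proof -
  have "ghost e \<otimes>\<^bsub>L\<^esub> ghost f = ghost e \<otimes>\<^bsub>L\<^esub> (vtx (s e) \<otimes>\<^bsub>L\<^esub> ghost f)"
    using assms ghost_mult_vtx_source[of e] by (simp add: generators_in_L L.m_assoc[symmetric])
  then show ?thesis using assms by (simp add: vtx_mult_ghost generators_in_L)
qed

lemma edg_mult_ghost_eq_zero:
  assumes "e \<in> E" "f \<in> E" "r e \<noteq> r f"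
  shows "edg e \<otimes>\<^bsub>L\<^esub> ghost f = \<zero>\<^bsub>L\<^esub>"
proof -
  have "edg e \<otimes>\<^bsub>L\<^esub> ghost f = edg e \<otimes>\<^bsub>L\<^esub> (vtx (r e) \<otimes>\<^bsub>L\<^esub> ghost f)"
    using assms edg_mult_vtx_range[of e] by (simp add: generators_in_L L.m_assoc[symmetric])
  then show ?thesis using assms by (simp add: vtx_mult_ghost generators_in_L)
qed

lemma edg_mult_ghost_nonzero:
  assumes e: "e \<in> E"
  shows "edg e \<otimes>\<^bsub>L\<^esub> ghost e \<noteq> \<zero>\<^bsub>L\<^esub>"
proof
  assume zero: "edg e \<otimes>\<^bsub>L\<^esub> ghost e = \<zero>\<^bsub>L\<^esub>"
  have "vtx (r e) = (ghost e \<otimes>\<^bsub>L\<^esub> edg e) \<otimes>\<^bsub>L\<^esub> (ghost e \<otimes>\<^bsub>L\<^esub> edg e)"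
    using vtx_mult_vtx[of "r e" "r e"] ghost_mult_edg[OF e e] e by (simp add: edge_range_in_V)
  also have "\<dots> = ghost e \<otimes>\<^bsub>L\<^esub> (edg e \<otimes>\<^bsub>L\<^esub> ghost e) \<otimes>\<^bsub>L\<^esub> edg e"
    using e by (simp add: generators_in_L L.m_assoc)
  finally show False
    using zero e vtx_nonzero[of "r e"] by (simp add: generators_in_L edge_range_in_V)
qed

lemma commutes_with_L_if_commutes_with_generators:
  assumes y: "y \<in> carrier L"
    and gen: "\<And>a. a \<in> lgens V E \<Longrightarrow> proj (mono [a]) \<otimes>\<^bsub>L\<^esub> y = y \<otimes>\<^bsub>L\<^esub> proj (mono [a])"
    and x: "x \<in> carrier L"
  shows "x \<otimes>\<^bsub>L\<^esub> y = y \<otimes>\<^bsub>L\<^esub> x"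
proof (rule lpa_induct[where P = "\<lambda>x. x \<otimes>\<^bsub>L\<^esub> y = y \<otimes>\<^bsub>L\<^esub> x", OF x])
  show "\<zero>\<^bsub>L\<^esub> \<otimes>\<^bsub>L\<^esub> y = y \<otimes>\<^bsub>L\<^esub> \<zero>\<^bsub>L\<^esub>" using y by simp
  show "lscalar c \<otimes>\<^bsub>L\<^esub> y = y \<otimes>\<^bsub>L\<^esub> lscalar c" for c by (rule lscalar_commute[OF y])
  show "proj (mono [a]) \<otimes>\<^bsub>L\<^esub> y = y \<otimes>\<^bsub>L\<^esub> proj (mono [a])" if "a \<in> lgens V E" for a
    using gen that .
  fix u v assume uv: "u \<in> carrier L" "v \<in> carrier L"
    and comm: "u \<otimes>\<^bsub>L\<^esub> y = y \<otimes>\<^bsub>L\<^esub> u" "v \<otimes>\<^bsub>L\<^esub> y = y \<otimes>\<^bsub>L\<^esub> v"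
  show "(u \<oplus>\<^bsub>L\<^esub> v) \<otimes>\<^bsub>L\<^esub> y = y \<otimes>\<^bsub>L\<^esub> (u \<oplus>\<^bsub>L\<^esub> v)"
    using uv y comm by (simp add: L.l_distr L.r_distr)
  have "(u \<otimes>\<^bsub>L\<^esub> v) \<otimes>\<^bsub>L\<^esub> y = u \<otimes>\<^bsub>L\<^esub> (y \<otimes>\<^bsub>L\<^esub> v)"
    using uv y comm by (simp add: L.m_assoc)
  also have "\<dots> = y \<otimes>\<^bsub>L\<^esub> (u \<otimes>\<^bsub>L\<^esub> v)"
    using uv y comm by (simp add: L.m_assoc[symmetric])
  finally show "(u \<otimes>\<^bsub>L\<^esub> v) \<otimes>\<^bsub>L\<^esub> y = y \<otimes>\<^bsub>L\<^esub> (u \<otimes>\<^bsub>L\<^esub> v)" .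
qed

lemma commutative_if_generators_commute:
  assumes "\<And>a b. a \<in> lgens V E \<Longrightarrow> b \<in> lgens V E
      \<Longrightarrow> proj (mono [a]) \<otimes>\<^bsub>L\<^esub> proj (mono [b]) = proj (mono [b]) \<otimes>\<^bsub>L\<^esub> proj (mono [a])"
  shows "\<not> noncommutative L"
proof -
  have gen_in_L: "a \<in> lgens V E \<Longrightarrow> proj (mono [a]) \<in> carrier L" for a
    by (simp add: proj_in_L mono_in_free_alg)
  have gen_comm: "x \<otimes>\<^bsub>L\<^esub> proj (mono [a]) = proj (mono [a]) \<otimes>\<^bsub>L\<^esub> x"
    if "a \<in> lgens V E" "x \<in> carrier L" for a x
    by (rule commutes_with_L_if_commutes_with_generators
          [OF gen_in_L[OF that(1)] assms[OF _ that(1)] that(2)])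
  have "x \<otimes>\<^bsub>L\<^esub> y = y \<otimes>\<^bsub>L\<^esub> x" if "x \<in> carrier L" "y \<in> carrier L" for x y
    by (rule commutes_with_L_if_commutes_with_generators
          [OF that(2) gen_comm[OF _ that(2), symmetric] that(1)])
  then show ?thesis by (auto simp: noncommutative_def)
qed

context
  assumes loops: "\<And>e. e \<in> E \<Longrightarrow> s e = r e" and range_inj: "inj_on r E"
begin

lemma edg_commute_edg: "e \<in> E \<Longrightarrow> f \<in> E \<Longrightarrow> edg e \<otimes>\<^bsub>L\<^esub> edg f = edg f \<otimes>\<^bsub>L\<^esub> edg e"
  using edg_mult_edg_eq_zero[of e f] edg_mult_edg_eq_zero[of f e] loops range_inj
  by (cases "e = f") (auto simp: inj_on_def)

lemma ghost_commute_ghost: "e \<in> E \<Longrightarrow> f \<in> E \<Longrightarrow> ghost e \<otimes>\<^bsub>L\<^esub> ghost f = ghost f \<otimes>\<^bsub>L\<^esub> ghost e"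
  using ghost_mult_ghost_eq_zero[of e f] ghost_mult_ghost_eq_zero[of f e] loops range_inj
  by (cases "e = f") (auto simp: inj_on_def)

lemma edg_commute_ghost:
  assumes e: "e \<in> E" and f: "f \<in> E"
  shows "edg e \<otimes>\<^bsub>L\<^esub> ghost f = ghost f \<otimes>\<^bsub>L\<^esub> edg e"
proof (cases "e = f")
  case True
  have "{e' \<in> E. s e' = s e} = {e}" using e loops range_inj by (auto simp: inj_on_def)
  then show ?thesis
    using True e vtx_eq_edg_mult_ghost_if_single_edge ghost_mult_edg[OF e e] loops by simp
next
  case False
  then have "r e \<noteq> r f" using e f range_inj by (auto simp: inj_on_def)
  then show ?thesis using False e f edg_mult_ghost_eq_zero ghost_mult_edg[OF f e] by simp
qed

lemma generators_commute:
  assumes "a \<in> lgens V E" "b \<in> lgens V E"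
  shows "proj (mono [a]) \<otimes>\<^bsub>L\<^esub> proj (mono [b]) = proj (mono [b]) \<otimes>\<^bsub>L\<^esub> proj (mono [a])"
proof -
  have comm: "x \<otimes>\<^bsub>L\<^esub> y = y \<otimes>\<^bsub>L\<^esub> x" if "x \<in> vtx ` V \<union> edg ` E \<union> ghost ` E"
    "y \<in> vtx ` V \<union> edg ` E \<union> ghost ` E" for x y
    using that by (elim UnE imageE)
      (simp_all add: vtx_mult_vtx vtx_mult_edg edg_mult_vtx vtx_mult_ghost ghost_mult_vtx
        edg_commute_edg ghost_commute_ghost edg_commute_ghost loops)
  have gen: "proj (mono [c]) \<in> vtx ` V \<union> edg ` E \<union> ghost ` E" if "c \<in> lgens V E" for c
    using that by (auto simp: lgens_def vtx_def edg_def ghost_def)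
  show ?thesis by (rule comm[OF gen[OF assms(1)] gen[OF assms(2)]])
qed

lemma commutative_if_loops_with_distinct_ranges: "\<not> noncommutative L"
  by (rule commutative_if_generators_commute[OF generators_commute])

end

end

locale lpa_char_0 = lpa V E r s field_type
  for V :: "'v set" and E :: "'e set" and r s :: "'e \<Rightarrow> 'v" and field_type :: "'k::field_char_0 itself"
begin

lemma matrix_units_lscalar:
  assumes "E11 \<in> carrier L" "E12 \<in> carrier L" "E21 \<in> carrier L"
    and "E12 \<otimes>\<^bsub>L\<^esub> E11 = \<zero>\<^bsub>L\<^esub>" "E12 \<otimes>\<^bsub>L\<^esub> E21 = E11" "E12 \<otimes>\<^bsub>L\<^esub> E12 = \<zero>\<^bsub>L\<^esub>"
    and "E21 \<otimes>\<^bsub>L\<^esub> E11 = E21" "E21 \<otimes>\<^bsub>L\<^esub> E21 = \<zero>\<^bsub>L\<^esub>"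
    and "E11 \<otimes>\<^bsub>L\<^esub> E11 = E11" "E11 \<otimes>\<^bsub>L\<^esub> E21 = \<zero>\<^bsub>L\<^esub>" "E11 \<noteq> \<zero>\<^bsub>L\<^esub>"
  shows "matrix_units L lscalar E11 E12 E21"
  by (intro matrix_units.intro ring_L matrix_units_axioms.intro lscalar_in_L lscalar_add
      lscalar_mult lscalar_one lscalar_commute assms)

lemma matrix_units_non_loop:
  assumes e: "e \<in> E" and "s e \<noteq> r e"
  shows "matrix_units L lscalar (edg e \<otimes>\<^bsub>L\<^esub> ghost e) (edg e) (ghost e)"
proof -
  have in_L: "edg e \<in> carrier L" "ghost e \<in> carrier L" using e by (simp_all add: generators_in_L)
  have ee: "edg e \<otimes>\<^bsub>L\<^esub> edg e = \<zero>\<^bsub>L\<^esub>" and gg: "ghost e \<otimes>\<^bsub>L\<^esub> ghost e = \<zero>\<^bsub>L\<^esub>"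
    using assms by (simp_all add: edg_mult_edg_eq_zero ghost_mult_ghost_eq_zero)
  have ge: "ghost e \<otimes>\<^bsub>L\<^esub> edg e = vtx (r e)" using ghost_mult_edg[OF e e] by simp
  show ?thesis
  proof (rule matrix_units_lscalar)
    show "edg e \<otimes>\<^bsub>L\<^esub> (edg e \<otimes>\<^bsub>L\<^esub> ghost e) = \<zero>\<^bsub>L\<^esub>"
      using in_L ee by (simp add: L.m_assoc[symmetric])
    show "ghost e \<otimes>\<^bsub>L\<^esub> (edg e \<otimes>\<^bsub>L\<^esub> ghost e) = ghost e"
      using in_L ge vtx_range_mult_ghost[OF e] by (simp add: L.m_assoc[symmetric])
    show "(edg e \<otimes>\<^bsub>L\<^esub> ghost e) \<otimes>\<^bsub>L\<^esub> (edg e \<otimes>\<^bsub>L\<^esub> ghost e) = edg e \<otimes>\<^bsub>L\<^esub> ghost e"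
      using in_L ge edg_mult_vtx_range[OF e] by (simp add: L.mult_regroup)
    show "(edg e \<otimes>\<^bsub>L\<^esub> ghost e) \<otimes>\<^bsub>L\<^esub> ghost e = \<zero>\<^bsub>L\<^esub>"
      using in_L gg by (simp add: L.m_assoc)
  qed (use in_L ee gg edg_mult_ghost_nonzero[OF e] in simp_all)
qed

lemma matrix_units_shared_range:
  assumes e: "e \<in> E" and f: "f \<in> E" and "e \<noteq> f" "r e = r f"
  shows "matrix_units L lscalar (edg e \<otimes>\<^bsub>L\<^esub> ghost e) (edg e \<otimes>\<^bsub>L\<^esub> ghost f) (edg f \<otimes>\<^bsub>L\<^esub> ghost e)"
proof -
  have in_L: "edg e \<in> carrier L" "edg f \<in> carrier L" "ghost e \<in> carrier L" "ghost f \<in> carrier L"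
    using e f by (simp_all add: generators_in_L)
  have ge: "ghost e \<otimes>\<^bsub>L\<^esub> edg e = vtx (r e)" and hf: "ghost f \<otimes>\<^bsub>L\<^esub> edg f = vtx (r e)"
    and he: "ghost f \<otimes>\<^bsub>L\<^esub> edg e = \<zero>\<^bsub>L\<^esub>" and gf: "ghost e \<otimes>\<^bsub>L\<^esub> edg f = \<zero>\<^bsub>L\<^esub>"
    using ghost_mult_edg e f assms(3,4) by simp_all
  have ev: "edg e \<otimes>\<^bsub>L\<^esub> vtx (r e) = edg e" and fv: "edg f \<otimes>\<^bsub>L\<^esub> vtx (r e) = edg f"
    using edg_mult_vtx_range e f assms(4) by metis+
  show ?thesis
    by (rule matrix_units_lscalar)
       (use in_L ge hf he gf ev fv edg_mult_ghost_nonzero[OF e] in \<open>simp_all add: L.mult_regroup\<close>)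
qed

end

theorem theorem3p4:
  fixes V :: "'v set" and E :: "'e set" and r s :: "'e \<Rightarrow> 'v"
  assumes "finite V"
    and "r ` E \<subseteq> V" and "s ` E \<subseteq> V"
    and "noncommutative (leavitt V E r s :: (('v, 'e) lgen list \<Rightarrow> 'k::field_char_0) set ring)"
  shows "\<exists>H. free_subgroup (units_of (leavitt V E r s :: (('v, 'e) lgen list \<Rightarrow> 'k) set ring)) H
             \<and> \<not> cyclic_subgroup (units_of (leavitt V E r s :: (('v, 'e) lgen list \<Rightarrow> 'k) set ring)) H"
proof -
  interpret lpa_char_0 V E r s "TYPE('k)"
    using assms(1-3) by unfold_locales
  have "\<exists>E11 E12 E21. matrix_units L lscalar E11 E12 E21"
  proof (cases "\<exists>e\<in>E. s e \<noteq> r e")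
    case True
    then show ?thesis using matrix_units_non_loop by blast
  next
    case False
    then have loops: "\<And>e. e \<in> E \<Longrightarrow> s e = r e" by blast
    have "\<not> inj_on r E"
      using commutative_if_loops_with_distinct_ranges[OF loops] assms(4) by blast
    then obtain e f where "e \<in> E" "f \<in> E" "e \<noteq> f" "r e = r f" by (auto simp: inj_on_def)
    then show ?thesis using matrix_units_shared_range by blast
  qed
  then obtain E11 E12 E21 where "matrix_units L lscalar E11 E12 E21" by blast
  then show ?thesis by (rule matrix_units.exists_free_noncyclic_units)
qed

end
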